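(* Let $\mathbb K$ be a commutative semiring with $0\neq1$ and let $S:\mathrm{NW}(\Delta)\to K$ be regular. Then the text series $\Phi_\circ(S),\Phi_\bullet(S):\mathrm{TXT}(\Delta)\to K$ are regular, where for an injective $\Phi$, $\Phi(S)(\tau)=S(\Phi^{-1}(\tau))$ if $\tau$ is in the image of $\Phi$ and $\Phi(S)(\tau)=0$ otherwise.
   Context: Nested words: $\Delta$ finite alphabet. A nesting relation of width $n$ is a relation $\nu$ on $[n]$ with: $\nu(i,j)\Rightarrow i<j$; $\nu(i,j),\nu(i,j')\Rightarrow j=j'$ and $\nu(i,j),\nu(i',j)\Rightarrow i=i'$; $\nu(i,j),\nu(i',j'),i<i'\Rightarrow j<i'$ or $j'<j$. A nested word is $(w,\nu)$, $w=a_1\cdots a_n\in\Delta^+$, $\nu$ of width $n$; $\mathrm{NW}(\Delta)$ is their set. If $\nu(i,j)$, $i$ is a call and $j$ a return position; others are internal. Factor $nw[i,j]=(a_i\cdots a_j,\{(k-i+1,\ell-i+1):(k,\ell)\in\nu,i\le k,\ell\le j\})$. WNWA over $\mathbb K$: $\mathcal A=(Q,\iota,\delta_{call},\delta_{int},\delta_{ret},\kappa)$, $Q$ finite, $\delta_{call},\delta_{int}:Q\times\Delta\times Q\to K$, $\delta_{ret}:Q\times Q\times\Delta\times Q\to K$, $\iota,\kappa:Q\to K$. A run on $(a_1\cdots a_n,\nu)$ is $(q_0,\dots,q_n)$; the weight at $j$ is $\delta_{call}(q_{j-1},a_j,q_j)$ for a call $j$, $\delta_{int}(q_{j-1},a_j,q_j)$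 for internal $j$, $\delta_{ret}(q_{j-1},q_{i-1},a_j,q_j)$ if $\nu(i,j)$; the run's weight is the product. $\|\mathcal A\|(nw)=\sum_{(q_0..q_n)}\iota(q_0)\mathrm{wt}\,\kappa(q_n)$. A series $\mathrm{NW}(\Delta)\to K$ is regular if it is some $\|\mathcal A\|$. Texts: $(V,\lambda,\le_1,\le_2)$ with $V$ finite nonempty, $\lambda:V\to\Delta$, two linear orders, up to isomorphism. $\tau\circ\tau'$ (resp. $\tau\bullet\tau'$): disjoint union, all of $\tau$ before $\tau'$ in $\le_1$, and in $\le_2$ all of $\tau$ before $\tau'$ (resp. all of $\tau'$ before $\tau$). $\mathrm{TXT}(\Delta)$: texts generated from singletons by $\circ,\bullet$. WPA: $\mathcal A=(H,V,\Omega,\mu,\mu_{op},\mu_{cl},\lambda,\gamma)$, $H,V$ disjoint finite sets (horizontal, vertical states), $\Omega$ finite set of parentheses, $\mu:(H\times\Delta\times H)\cup(V\times\Delta\times V)\to K$, $\mu_{op},\mu_{cl}:(H\times\Omega\times V)\cup(V\times\Omega\times H)\to K$, $\lambda,\gamma:H\cup V\to K$. Runs (with label, weight, initial/final state) are defined inductively: (1) for $(q_1,q_2)\in(H\times H)\cup(V\times V)$, $a\in\Delta$, $(q_1,a,q_2)$ is a run with label $a$, weight $\mu(q_1,a,q_2)$, from $q_1$ to $q_2$; (2) if $r_1,r_2$ are runs with final state of $r_1$ = initial state of $r_2$ $=q$, then $r_1r_2$ is a run from the initial state of $r_1$ to the final state of $r_2$, weight the product, label $\mathrm{lab}(r_1)\circ\mathrm{lab}(r_2)$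 if $q\in H$ and $\mathrm{lab}(r_1)\bullet\mathrm{lab}(r_2)$ if $q\in V$; (3) if $r$ is a run obtained by rule (2), from $p_1$ to $p_2$, with $p_1\in H$ (resp. $V$), and $q_1,q_2\in V$ (resp. $H$), $s\in\Omega$, then $(q_1,(_s,p_1)\,r\,(p_2,)_s,q_2)$ is a run from $q_1$ to $q_2$ with label $\mathrm{lab}(r)$ and weight $\mu_{op}(q_1,s,p_1)\,\mathrm{wt}(r)\,\mu_{cl}(p_2,s,q_2)$. Behavior: $\|\mathcal A\|(\tau)=\sum_{q_1,q_2}\lambda(q_1)\sum_{r}\mathrm{wt}(r)\gamma(q_2)$ over runs from $q_1$ to $q_2$ with label $\tau$. A series $\mathrm{TXT}(\Delta)\to K$ is regular if it is some $\|\mathcal A\|$. Encodings: if $\nu=\emptyset$, $\Phi_\circ(nw)=a_1\circ\cdots\circ a_n$, $\Phi_\bullet(nw)=a_1\bullet\cdots\bullet a_n$; otherwise with $i$ the least call, $j$ its return, $nw'=nw[i+1,j-1]$, $nw''=nw[j+1,n]$: $\Phi_\circ(nw)=a_1\circ\cdots\circ a_{i-1}\circ(a_i\bullet\Phi_\bullet(nw')\bullet a_j)\circ\Phi_\circ(nw'')$, $\Phi_\bullet(nw)=a_1\bullet\cdots\bullet a_{i-1}\bullet(a_i\circ\Phi_\circ(nw')\circ a_j)\bullet\Phi_\bullet(nw'')$, omitting factors for empty intervals. Both maps are injective. *)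

theory Defs
  imports Main
begin

text \<open>A nested word is a pair (w, nu) with w a nonempty word, positions 1..length w,
  and nu a nesting relation on those positions.\<close>

type_synonym 'd nword = "'d list \<times> (nat \<times> nat) set"

definition nesting_rel :: "nat \<Rightarrow> (nat \<times> nat) set \<Rightarrow> bool" where
  "nesting_rel n \<nu> \<longleftrightarrow>
     \<nu> \<subseteq> {1..n} \<times> {1..n}
   \<and> (\<forall>i j. (i, j) \<in> \<nu> \<longrightarrow> i < j)
   \<and> (\<forall>i j j'. (i, j) \<in> \<nu> \<longrightarrow> (i, j') \<in> \<nu> \<longrightarrow> j = j')
   \<and> (\<forall>i i' j. (i, j) \<in> \<nu> \<longrightarrow> (i', j) \<in> \<nu> \<longrightarrow> i = i')
   \<and> (\<forall>i j i' j'. (i, j) \<in> \<nu> \<longrightarrow> (i', j') \<in> \<nu> \<longrightarrow> i < i' \<longrightarrow> j < i' \<or> j' < j)"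

definition is_nw :: "'d nword \<Rightarrow> bool" where
  "is_nw nw \<longleftrightarrow> fst nw \<noteq> [] \<and> nesting_rel (length (fst nw)) (snd nw)"

definition nw_factor :: "'d nword \<Rightarrow> nat \<Rightarrow> nat \<Rightarrow> 'd nword" where
  "nw_factor nw i j =
     (take (Suc j - i) (drop (i - 1) (fst nw)),
      {(k + 1 - i, l + 1 - i) | k l. (k, l) \<in> snd nw \<and> i \<le> k \<and> l \<le> j})"

record ('d, 'k) wnwa =
  nwa_Q :: "nat set"
  nwa_iota :: "nat \<Rightarrow> 'k"
  nwa_call :: "nat \<Rightarrow> 'd \<Rightarrow> nat \<Rightarrow> 'k"
  nwa_int :: "nat \<Rightarrow> 'd \<Rightarrow> nat \<Rightarrow> 'k"
  nwa_ret :: "nat \<Rightarrow> nat \<Rightarrow> 'd \<Rightarrow> nat \<Rightarrow> 'k"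
  nwa_kappa :: "nat \<Rightarrow> 'k"

definition wnwa_ok :: "('d, 'k) wnwa \<Rightarrow> bool" where
  "wnwa_ok A \<longleftrightarrow> finite (nwa_Q A)"

text \<open>Weight at position j (1-based) of the run qs = [q_0, ..., q_n].\<close>
definition wnwa_step :: "('d, 'k) wnwa \<Rightarrow> 'd nword \<Rightarrow> nat list \<Rightarrow> nat \<Rightarrow> 'k" where
  "wnwa_step A nw qs j =
    (if \<exists>k. (j, k) \<in> snd nw then nwa_call A (qs ! (j - 1)) (fst nw ! (j - 1)) (qs ! j)
     else if \<exists>i. (i, j) \<in> snd nw then
       nwa_ret A (qs ! (j - 1)) (qs ! ((THE i. (i, j) \<in> snd nw) - 1)) (fst nw ! (j - 1)) (qs ! j)
     else nwa_int A (qs ! (j - 1)) (fst nw ! (j - 1)) (qs ! j))"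

definition wnwa_beh :: "('d, 'k::comm_semiring_1) wnwa \<Rightarrow> 'd nword \<Rightarrow> 'k" where
  "wnwa_beh A nw =
    (\<Sum>qs \<in> {qs. length qs = Suc (length (fst nw)) \<and> set qs \<subseteq> nwa_Q A}.
       nwa_iota A (qs ! 0) * (\<Prod>j \<in> {1..length (fst nw)}. wnwa_step A nw qs j)
       * nwa_kappa A (qs ! length (fst nw)))"

definition regular_nw_series :: "('d nword \<Rightarrow> 'k::comm_semiring_1) \<Rightarrow> bool" where
  "regular_nw_series S \<longleftrightarrow>
     (\<exists>A :: ('d, 'k) wnwa. wnwa_ok A \<and> (\<forall>nw. is_nw nw \<longrightarrow> S nw = wnwa_beh A nw))"

text \<open>Canonical representative of the isomorphism class of a text (V, lambda, le1, le2):
  V is identified with {0..<n} enumerated along le1; the first component lists the labels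
  in le1-order, the second component lists the elements of V in le2-order (a permutation
  of [0..<n]).\<close>

type_synonym 'd tx = "'d list \<times> nat list"

definition tsing :: "'d \<Rightarrow> 'd tx" where
  "tsing a = ([a], [0])"

definition tcirc :: "'d tx \<Rightarrow> 'd tx \<Rightarrow> 'd tx" where
  "tcirc t u = (fst t @ fst u, snd t @ map (\<lambda>x. x + length (fst t)) (snd u))"

definition tbul :: "'d tx \<Rightarrow> 'd tx \<Rightarrow> 'd tx" where
  "tbul t u = (fst t @ fst u, map (\<lambda>x. x + length (fst t)) (snd u) @ snd t)"

inductive_set TXT :: "'d tx set" where
  sing: "tsing a \<in> TXT"
| circ: "t \<in> TXT \<Longrightarrow> u \<in> TXT \<Longrightarrow> tcirc t u \<in> TXT"
| bul: "t \<in> TXT \<Longrightarrow> u \<in> TXT \<Longrightarrow> tbul t u \<in> TXT"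

record ('d, 'k) wpa =
  pa_H :: "nat set"
  pa_V :: "nat set"
  pa_Om :: "nat set"
  pa_mu :: "nat \<Rightarrow> 'd \<Rightarrow> nat \<Rightarrow> 'k"
  pa_op :: "nat \<Rightarrow> nat \<Rightarrow> nat \<Rightarrow> 'k"
  pa_cl :: "nat \<Rightarrow> nat \<Rightarrow> nat \<Rightarrow> 'k"
  pa_lam :: "nat \<Rightarrow> 'k"
  pa_gam :: "nat \<Rightarrow> 'k"

definition wpa_ok :: "('d, 'k) wpa \<Rightarrow> bool" where
  "wpa_ok A \<longleftrightarrow> finite (pa_H A) \<and> finite (pa_V A) \<and> pa_H A \<inter> pa_V A = {} \<and> finite (pa_Om A)"

text \<open>A run is a sequence of top-level blocks: an atomic transition (q1, a, q2), or a
  bracketed run (q1, (_s, p1) r (p2, )_s, q2), where p1, p2 are the initial and final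
  state of the inner run r.\<close>
datatype 'd blk = Atm nat 'd nat | Brk nat nat "'d blk list" nat

fun bini :: "'d blk \<Rightarrow> nat" where
  "bini (Atm q1 a q2) = q1"
| "bini (Brk q1 s r q2) = q1"

fun bfin :: "'d blk \<Rightarrow> nat" where
  "bfin (Atm q1 a q2) = q2"
| "bfin (Brk q1 s r q2) = q2"

definition rini :: "'d blk list \<Rightarrow> nat" where "rini r = bini (hd r)"
definition rfin :: "'d blk list \<Rightarrow> nat" where "rfin r = bfin (last r)"

inductive wpa_run :: "('d, 'k) wpa \<Rightarrow> 'd blk list \<Rightarrow> bool" for A where
  atom: "(q1 \<in> pa_H A \<and> q2 \<in> pa_H A) \<or> (q1 \<in> pa_V A \<and> q2 \<in> pa_V A)
          \<Longrightarrow> wpa_run A [Atm q1 a q2]"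
| cat: "wpa_run A r1 \<Longrightarrow> wpa_run A r2 \<Longrightarrow> rfin r1 = rini r2 \<Longrightarrow> wpa_run A (r1 @ r2)"
| br: "wpa_run A r1 \<Longrightarrow> wpa_run A r2 \<Longrightarrow> rfin r1 = rini r2 \<Longrightarrow>
        (rini r1 \<in> pa_H A \<and> q1 \<in> pa_V A \<and> q2 \<in> pa_V A) \<or>
        (rini r1 \<in> pa_V A \<and> q1 \<in> pa_H A \<and> q2 \<in> pa_H A) \<Longrightarrow>
        s \<in> pa_Om A \<Longrightarrow> wpa_run A [Brk q1 s (r1 @ r2) q2]"

text \<open>Label: at a top-level junction state q the labels are combined by circ if q is
  horizontal, by bullet otherwise (all top-level junctions of a run have the same kind,
  and both operations are associative, so this agrees with the inductive definition).\<close>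
fun wpa_blab :: "('d, 'k) wpa \<Rightarrow> 'd blk \<Rightarrow> 'd tx"
and wpa_lab :: "('d, 'k) wpa \<Rightarrow> 'd blk list \<Rightarrow> 'd tx" where
  "wpa_blab A (Atm q1 a q2) = tsing a"
| "wpa_blab A (Brk q1 s r q2) = wpa_lab A r"
| "wpa_lab A [] = ([], [])"
| "wpa_lab A [b] = wpa_blab A b"
| "wpa_lab A (b # c # rs) =
     (if bfin b \<in> pa_H A then tcirc else tbul) (wpa_blab A b) (wpa_lab A (c # rs))"

fun wpa_bwt :: "('d, 'k::comm_semiring_1) wpa \<Rightarrow> 'd blk \<Rightarrow> 'k"
and wpa_wt :: "('d, 'k::comm_semiring_1) wpa \<Rightarrow> 'd blk list \<Rightarrow> 'k" where
  "wpa_bwt A (Atm q1 a q2) = pa_mu A q1 a q2"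
| "wpa_bwt A (Brk q1 s r q2) = pa_op A q1 s (rini r) * wpa_wt A r * pa_cl A (rfin r) s q2"
| "wpa_wt A [] = 1"
| "wpa_wt A (b # rs) = wpa_bwt A b * wpa_wt A rs"

definition wpa_beh :: "('d, 'k::comm_semiring_1) wpa \<Rightarrow> 'd tx \<Rightarrow> 'k" where
  "wpa_beh A \<tau> =
    (\<Sum>q1 \<in> pa_H A \<union> pa_V A. \<Sum>q2 \<in> pa_H A \<union> pa_V A.
       pa_lam A q1
       * (\<Sum>r \<in> {r. wpa_run A r \<and> rini r = q1 \<and> rfin r = q2 \<and> wpa_lab A r = \<tau>}. wpa_wt A r)
       * pa_gam A q2)"

definition regular_txt_series :: "('d tx \<Rightarrow> 'k::comm_semiring_1) \<Rightarrow> bool" where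
  "regular_txt_series T \<longleftrightarrow>
     (\<exists>A :: ('d, 'k) wpa. wpa_ok A \<and> (\<forall>\<tau> \<in> TXT. T \<tau> = wpa_beh A \<tau>))"

fun tfold :: "('d tx \<Rightarrow> 'd tx \<Rightarrow> 'd tx) \<Rightarrow> 'd tx list \<Rightarrow> 'd tx" where
  "tfold f [] = ([], [])"
| "tfold f [t] = t"
| "tfold f (t # u # ts) = f t (tfold f (u # ts))"

definition top :: "bool \<Rightarrow> 'd tx \<Rightarrow> 'd tx \<Rightarrow> 'd tx" where
  "top b = (if b then tcirc else tbul)"

function phi :: "bool \<Rightarrow> 'd nword \<Rightarrow> 'd tx" where
  "phi b nw =
    (if snd nw = {} then tfold (top b) (map tsing (fst nw))
     else
       (let i = (LEAST i. \<exists>j. (i, j) \<in> snd nw);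
            j = (THE j. (i, j) \<in> snd nw);
            n = length (fst nw)
        in if 1 \<le> i \<and> i < j \<and> j \<le> n then
             tfold (top b)
               (map tsing (take (i - 1) (fst nw))
                @ [tfold (top (\<not> b))
                     ([tsing (fst nw ! (i - 1))]
                      @ (if i + 1 \<le> j - 1 then [phi (\<not> b) (nw_factor nw (i + 1) (j - 1))] else [])
                      @ [tsing (fst nw ! (j - 1))])]
                @ (if j + 1 \<le> n then [phi b (nw_factor nw (j + 1) n)] else []))
           else ([], [])))"
  by pat_completeness auto
termination
  by (relation "measure (\<lambda>(b, nw). length (fst nw))") (auto simp: nw_factor_def)

definition Phi_circ :: "'d nword \<Rightarrow> 'd tx" where "Phi_circ = phi True"
definition Phi_bul :: "'d nword \<Rightarrow> 'd tx" where "Phi_bul = phi False"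

definition enc_series :: "('d nword \<Rightarrow> 'd tx) \<Rightarrow> ('d nword \<Rightarrow> 'k::zero) \<Rightarrow> 'd tx \<Rightarrow> 'k" where
  "enc_series \<Phi> S \<tau> =
     (if \<exists>nw. is_nw nw \<and> \<Phi> nw = \<tau> then S (THE nw. is_nw nw \<and> \<Phi> nw = \<tau>) else 0)"

end

theory Submission
  imports Defs "HOL-Library.Nat_Bijection"
begin

text \<open>A nested word is the same thing as a forest whose leaves are internal letters and
  whose inner nodes carry a call letter and its matching return letter.  Both encodings build the
  text of a forest by alternating \<open>\<circ>\<close> and \<open>\<bullet>\<close> from level to level, and they are
  injective on forests.  A weighted nested word automaton is simulated level by level: a forest
  is read at states of one kind (horizontal or vertical), and the forest below a call/return pair
  is read inside a parenthesis at states of the other kind.  The parenthesis is labelled by the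
  state of the nested word automaton before the call, so that its return transition can be
  evaluated when the parenthesis closes.  The runs of nonzero weight between top-level states are
  then exactly the images of pairs of a forest and a state sequence of the nested word automaton,
  with the same weights.\<close>

lemma tcirc_assoc: "tcirc (tcirc t u) v = tcirc t (tcirc u v)"
  by (simp add: tcirc_def add.assoc)

lemma tbul_assoc: "tbul (tbul t u) v = tbul t (tbul u v)"
  by (simp add: tbul_def add.assoc)

lemma top_assoc: "top b (top b t u) v = top b t (top b u v)"
  by (simp add: top_def tcirc_assoc tbul_assoc)

lemma tfold_Cons: "ts \<noteq> [] \<Longrightarrow> tfold f (t # ts) = f t (tfold f ts)"
  by (cases ts) auto

lemma tfold_top_append:
  "xs \<noteq> [] \<Longrightarrow> ys \<noteq> [] \<Longrightarrow> tfold (top b) (xs @ ys) = top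
      b (tfold (top b) xs) (tfold (top b) ys)"
proof (induction xs)
  case (Cons x xs)
  then show ?case by (cases "xs = []") (auto simp: top_assoc tfold_Cons)
qed simp

lemma tfold_top_flatten:
  assumes "ys \<noteq> []"
  shows "tfold (top b) (xs @ [tfold (top b) ys] @ zs) = tfold (top b) (xs @ ys @ zs)"
proof -
  have inner: "tfold (top b) (tfold (top b) ys # zs) = tfold (top b) (ys @ zs)"
    using assms by (cases "zs = []") (auto simp: tfold_top_append tfold_Cons)
  show ?thesis
  proof (cases "xs = []")
    case False
    then show ?thesis
      using inner assms tfold_top_append[of xs "tfold (top b) ys # zs" b]
        tfold_top_append[of xs "ys @ zs" b] by simp
  qed (use inner in simp)
qed

lemma length_top:
  "length (fst (top b t u)) = length (fst t) + length (fst u)"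
  "length (snd (top b t u)) = length (snd t) + length (snd u)"
  by (auto simp: top_def tcirc_def tbul_def)

lemma length_tfold_top:
  "length (fst (tfold (top b) ts)) = sum_list (map (length \<circ> fst) ts)
   \<and> length (snd (tfold (top b) ts)) = sum_list (map (length \<circ> snd) ts)"
proof (induction ts)
  case (Cons t ts)
  then show ?case by (cases ts) (simp_all add: length_top)
qed simp

lemma tcirc_cancel:
  assumes "length (snd t) = length (fst t)" "length (snd t') = length (fst t')"
    and "length (fst t) = length (fst t')" and "tcirc t u = tcirc t' u'"
  shows "t = t' \<and> u = u'"
proof -
  have fst_eq: "fst t = fst t' \<and> fst u = fst u'"
    using assms(3,4) by (simp add: tcirc_def)
  have "snd t @ map (\<lambda>x. x + length (fst t)) (snd u) = snd t' @ map (\<lambda>x. x + length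
      (fst t)) (snd u')"
    using assms(3,4) by (simp add: tcirc_def)
  then have "snd t = snd t' \<and> map (\<lambda>x. x + length (fst t)) (snd u) = map (\<lambda>x.
      x + length (fst t)) (snd u')"
    using assms(1-3) by simp
  then have "snd t = snd t' \<and> snd u = snd u'"
    by (simp add: inj_map_eq_map inj_on_def)
  then show ?thesis using fst_eq by (simp add: prod_eq_iff)
qed

definition tswap :: "'d tx \<Rightarrow> 'd tx" where
  "tswap t = (fst t, rev (snd t))"

lemma tswap_top: "tswap (top b t u) = top (\<not> b) (tswap t) (tswap u)"
  by (simp add: tswap_def top_def tcirc_def tbul_def rev_map)

lemma tswap_tsing[simp]: "tswap (tsing a) = tsing a"
  by (simp add: tswap_def tsing_def)

lemma tswap_tfold_top: "ts \<noteq> [] \<Longrightarrow> tswap (tfold (top b) ts) = tfold (top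
    (\<not> b)) (map tswap ts)"
proof (induction ts)
  case (Cons t ts)
  then show ?case by (cases ts) (simp_all add: tswap_top)
qed simp

section \<open>Forests\<close>

datatype 'd ntree = Leaf 'd | Nest 'd "'d ntree list" 'd

fun tree_len :: "'d ntree \<Rightarrow> nat" and forest_len :: "'d ntree list \<Rightarrow> nat" where
  "tree_len (Leaf a) = 1"
| "tree_len (Nest a g c) = forest_len g + 2"
| "forest_len [] = 0"
| "forest_len (x # f) = tree_len x + forest_len f"

lemma tree_len_pos: "tree_len x \<ge> 1"
  by (cases x) auto

lemma forest_len_eq_0_iff[simp]: "forest_len f = 0 \<longleftrightarrow> f = []"
  using tree_len_pos[of "hd f"] by (cases f) auto

lemma forest_len_append[simp]: "forest_len (f @ f') = forest_len f + forest_len f'"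
  by (induction f) auto

lemma forest_len_sum_list: "forest_len f = sum_list (map tree_len f)"
  by (induction f) auto

fun enc_tree :: "bool \<Rightarrow> 'd ntree \<Rightarrow> 'd tx" and enc_forest :: "bool
    \<Rightarrow> 'd ntree list \<Rightarrow> 'd tx" where
  "enc_tree b (Leaf a) = tsing a"
| "enc_tree b (Nest a g c) =
     tfold (top (\<not> b)) ([tsing a] @ (if g = [] then [] else [enc_forest (\<not> b) g]) @ [tsing c])"
| "enc_forest b f = tfold (top b) (map (enc_tree b) f)"

declare enc_forest.simps[simp del]

lemma enc_forest_Cons: "f \<noteq> [] \<Longrightarrow> enc_forest b (x # f) = top b (enc_tree b x)
    (enc_forest b f)"
  by (cases f) (auto simp: enc_forest.simps)

lemma enc_forest_single[simp]: "enc_forest b [x] = enc_tree b x"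
  by (simp add: enc_forest.simps)

lemma tswap_enc:
  fixes x :: "'d ntree" and f :: "'d ntree list"
  shows "tswap (enc_tree b x) = enc_tree (\<not> b) x"
    and "f \<noteq> [] \<Longrightarrow> tswap (enc_forest b f) = enc_forest (\<not> b) f"
proof (induction b x and b f rule: enc_tree_enc_forest.induct)
  case (3 b f)
  then show ?case by (simp add: enc_forest.simps tswap_tfold_top cong: map_cong)
qed (auto simp: tswap_tfold_top)

lemma length_enc:
  fixes x :: "'d ntree" and f :: "'d ntree list"
  shows "length (fst (enc_tree b x)) = tree_len x \<and> length (snd (enc_tree b x)) = tree_len x"
    and "length (fst (enc_forest b f)) = forest_len f \<and> length (snd (enc_forest b f)) =
        forest_len f"
proof (induction b x and b f rule: enc_tree_enc_forest.induct)
  case (3 b f)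
  then show ?case
    by (simp add: enc_forest.simps length_tfold_top forest_len_sum_list cong: map_cong)
qed (auto simp: length_top tsing_def)

text \<open>In \<open>enc_tree True\<close> the last letter of a tree comes first in the second order;
  this recovers the length of the first tree of a forest from its encoding.\<close>
lemma hd_snd_enc_tree: "hd (snd (enc_tree True x)) = tree_len x - 1"
  by (cases x) (auto simp: top_def tbul_def tsing_def length_enc)

lemma hd_snd_enc_forest_Cons: "hd (snd (enc_forest True (x # f))) = tree_len x - 1"
proof -
  have "snd (enc_tree True x) \<noteq> []"
    using length_enc(1)[of True x] tree_len_pos[of x] by auto
  then show ?thesis
    using hd_snd_enc_tree[of x] by (cases "f = []") (simp_all add: enc_forest_Cons top_def tcirc_def)
qed

lemma enc_tree_False_Nest:
  "enc_tree False (Nest a g c)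
     = tcirc (tsing a) (tfold tcirc ((if g = [] then [] else [enc_forest True g]) @ [tsing c]))"
  by (simp add: top_def)

lemma enc_tree_Nest_cancel:
  assumes "enc_tree True (Nest a g c) = enc_tree True (Nest a' g' c')"
  shows "a = a'" and "c = c'" and "g = [] \<longleftrightarrow> g' = []"
    and "g \<noteq> [] \<Longrightarrow> enc_forest True g = enc_forest True g'"
proof -
  have len_g: "forest_len g = forest_len g'"
    using length_enc(1)[of True "Nest a g c"] length_enc(1)[of True "Nest a' g' c'"] assms by simp
  have "enc_tree False (Nest a g c) = enc_tree False (Nest a' g' c')"
    using arg_cong[OF assms, of tswap] unfolding tswap_enc(1) by simp
  then have "tsing a = tsing a' \<and> tfold tcirc ((if g = [] then [] else [enc_forest True g]) @
      [tsing c])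
      = tfold tcirc ((if g' = [] then [] else [enc_forest True g']) @ [tsing c'])"
    unfolding enc_tree_False_Nest by (rule tcirc_cancel[rotated 3]) (simp_all add: tsing_def)
  then have "a = a'" and inner: "tfold tcirc ((if g = [] then [] else [enc_forest True g]) @ [tsing c])
      = tfold tcirc ((if g' = [] then [] else [enc_forest True g']) @ [tsing c'])"
    by (simp_all add: tsing_def)
  have "c = c' \<and> (g \<noteq> [] \<longrightarrow> enc_forest True g = enc_forest True g')"
  proof (cases "g = []")
    case True
    with len_g inner show ?thesis by (simp add: tsing_def)
  next
    case False
    moreover from False len_g have "g' \<noteq> []" by auto
    ultimately have "tcirc (enc_forest True g) (tsing c) = tcirc (enc_forest True g') (tsing c')"
      using inner by simp
    then have "enc_forest True g = enc_forest True g' \<and> tsing c = tsing c'"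
      using len_g length_enc(2)[of True g] length_enc(2)[of True g'] by (intro tcirc_cancel) simp_all
    then show ?thesis by (simp add: tsing_def)
  qed
  then show "a = a'" and "c = c'" and "g = [] \<longleftrightarrow> g' = []"
    and "g \<noteq> [] \<Longrightarrow> enc_forest True g = enc_forest True g'"
    using \<open>a = a'\<close> len_g by auto
qed

lemma enc_forest_Cons_cancel:
  assumes "enc_forest True (x # f) = enc_forest True (x' # f')"
  shows "enc_tree True x = enc_tree True x'" and "f = [] \<longleftrightarrow> f' = []"
    and "f \<noteq> [] \<Longrightarrow> enc_forest True f = enc_forest True f'"
proof -
  have "tree_len x - 1 = tree_len x' - 1"
    using assms hd_snd_enc_forest_Cons[of x f] hd_snd_enc_forest_Cons[of x' f'] by simp
  then have len_x: "tree_len x = tree_len x'"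
    using tree_len_pos[of x] tree_len_pos[of x'] by linarith
  moreover have "forest_len (x # f) = forest_len (x' # f')"
    using assms length_enc(2)[of True "x # f"] length_enc(2)[of True "x' # f'"] by simp
  ultimately have len_f: "forest_len f = forest_len f'" by simp
  then show "f = [] \<longleftrightarrow> f' = []" by auto
  have "enc_tree True x = enc_tree True x' \<and> (f \<noteq> [] \<longrightarrow> enc_forest True
      f = enc_forest True f')"
  proof (cases "f = []")
    case False
    with len_f have "f' \<noteq> []" by auto
    then have "enc_tree True x = enc_tree True x' \<and> enc_forest True f = enc_forest True f'"
      using assms False len_x length_enc(1)[of True x] length_enc(1)[of True x']
      by (intro tcirc_cancel) (simp_all add: enc_forest_Cons top_def)
    then show ?thesis by simp
  qed (use assms len_f in simp)
  then show "enc_tree True x = enc_tree True x'" and "f \<noteq> [] \<Longrightarrow> enc_forest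
      True f = enc_forest True f'"
    by simp_all
qed

lemma enc_inj:
  fixes x :: "'d ntree" and f :: "'d ntree list"
  shows "enc_tree True x = enc_tree True x' \<Longrightarrow> x = x'"
    and "f \<noteq> [] \<Longrightarrow> f' \<noteq> [] \<Longrightarrow> enc_forest True f =
        enc_forest True f' \<Longrightarrow> f = f'"
proof (induction x and f arbitrary: x' and f' rule: tree_len_forest_len.induct)
  case (1 a)
  have "tree_len x' = 1"
    using length_enc(1)[of True x'] 1[symmetric] by (simp add: tsing_def)
  then show ?case using 1 by (cases x') (auto simp: tsing_def)
next
  case (2 a g c)
  have "tree_len x' = tree_len (Nest a g c)"
    using length_enc(1)[of True x'] length_enc(1)[of True "Nest a g c"] unfolding 2(2) by simp
  then obtain a' g' c' where x': "x' = Nest a' g' c'" by (cases x') auto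
  note cancel = enc_tree_Nest_cancel[OF 2(2)[unfolded x']]
  have "g = g'"
  proof (cases "g = []")
    case False
    then show ?thesis using 2(1)[OF False _ cancel(4)[OF False]] cancel(3) by simp
  qed (use cancel(3) in simp)
  then show ?case using x' cancel(1,2) by simp
next
  case (4 x f)
  obtain x'' f'' where f': "f' = x'' # f''" using 4(4) by (cases f') auto
  note cancel = enc_forest_Cons_cancel[OF 4(5)[unfolded f']]
  have "x = x''" by (rule 4(1)[OF cancel(1)])
  moreover have "f = f''"
  proof (cases "f = []")
    case False
    then show ?thesis using 4(2)[OF False _ cancel(3)[OF False]] cancel(2) by simp
  qed (use cancel(2) in simp)
  ultimately show ?case using f' by simp
qed simp

lemma enc_forest_inj:
  assumes "f \<noteq> []" "f' \<noteq> []" and "enc_forest b f = enc_forest b f'"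
  shows "f = f'"
proof -
  have "enc_forest True f = enc_forest True f'"
    using assms tswap_enc(2)[of f b] tswap_enc(2)[of f' b] by (cases b) auto
  then show ?thesis using enc_inj(2) assms(1,2) by blast
qed

section \<open>Nested words of forests\<close>

definition shift_rel :: "nat \<Rightarrow> (nat \<times> nat) set \<Rightarrow> (nat \<times> nat)
    set" where
  "shift_rel k v = (\<lambda>(i, j). (i + k, j + k)) ` v"

definition restrict_rel :: "nat \<Rightarrow> nat \<Rightarrow> (nat \<times> nat) set \<Rightarrow> (nat \<times> nat) set" where
  "restrict_rel a b v = (\<lambda>(i, j). (i - a, j - a)) ` {(i, j) \<in> v. a < i \<and> a < j \<and> j \<le> b}"

lemma mem_shift_rel: "(i, j) \<in> shift_rel k v \<longleftrightarrow> k \<le> i \<and> k \<le> j \<and> (i - k, j - k) \<in> v"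
  unfolding shift_rel_def by (auto simp: image_iff intro!: bexI[of _ "(i - k, j - k)"])

lemma mem_shift_rel_add[simp]: "(i + k, j + k) \<in> shift_rel k v \<longleftrightarrow> (i, j) \<in> v"
  by (simp add: mem_shift_rel)

lemma mem_restrict_rel:
  "(i, j) \<in> restrict_rel a b v \<longleftrightarrow> 0 < i \<and> 0 < j \<and> j + a \<le> b
      \<and> (i + a, j + a) \<in> v"
  unfolding restrict_rel_def by (force simp: image_iff intro!: bexI[of _ "(i + a, j + a)"])

lemma shift_rel_0[simp]: "shift_rel 0 v = v"
  by (simp add: shift_rel_def)

lemma shift_rel_empty[simp]: "shift_rel k {} = {}"
  by (simp add: shift_rel_def)

lemma shift_rel_Un: "shift_rel k (v \<union> v') = shift_rel k v \<union> shift_rel k v'"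
  by (simp add: shift_rel_def image_Un)

lemma shift_rel_insert: "shift_rel k (insert (i, j) v) = insert (i + k, j + k) (shift_rel k v)"
  by (simp add: shift_rel_def)

lemma shift_rel_shift_rel: "shift_rel k (shift_rel l v) = shift_rel (l + k) v"
  by (auto simp: set_eq_iff mem_shift_rel add.commute)

lemma nesting_relI:
  assumes "\<And>i j. (i, j) \<in> v \<Longrightarrow> 1 \<le> i \<and> i < j \<and> j \<le> n"
    and "\<And>i j j'. (i, j) \<in> v \<Longrightarrow> (i, j') \<in> v \<Longrightarrow> j = j'"
    and "\<And>i i' j. (i, j) \<in> v \<Longrightarrow> (i', j) \<in> v \<Longrightarrow> i = i'"
    and "\<And>i j i' j'. (i, j) \<in> v \<Longrightarrow> (i', j') \<in> v \<Longrightarrow> i <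
        i' \<Longrightarrow> j < i' \<or> j' < j"
  shows "nesting_rel n v"
  using assms unfolding nesting_rel_def by fastforce

lemma nesting_rel_bounds: "nesting_rel n v \<Longrightarrow> (i, j) \<in> v \<Longrightarrow> 1
    \<le> i \<and> i < j \<and> j \<le> n"
  unfolding nesting_rel_def by auto

lemma nesting_rel_unique_return: "nesting_rel n v \<Longrightarrow> (i, j) \<in> v
    \<Longrightarrow> (i, j') \<in> v \<Longrightarrow> j = j'"
  unfolding nesting_rel_def by blast

lemma nesting_rel_unique_call: "nesting_rel n v \<Longrightarrow> (i, j) \<in> v \<Longrightarrow>
    (i', j) \<in> v \<Longrightarrow> i = i'"
  unfolding nesting_rel_def by blast

lemma nesting_rel_nested:
  "nesting_rel n v \<Longrightarrow> (i, j) \<in> v \<Longrightarrow> (i', j') \<in> v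
      \<Longrightarrow> i < i' \<Longrightarrow> j < i' \<or> j' < j"
  unfolding nesting_rel_def by blast

lemma nesting_rel_the_call: "nesting_rel n v \<Longrightarrow> (i, j) \<in> v \<Longrightarrow>
    (THE i. (i, j) \<in> v) = i"
  by (blast intro: the_equality dest: nesting_rel_unique_call)

lemma nesting_rel_empty: "nesting_rel n {}"
  by (simp add: nesting_rel_def)

lemma nesting_rel_append:
  assumes v: "nesting_rel n v" and v': "nesting_rel n' v'"
  shows "nesting_rel (n + n') (v \<union> shift_rel n v')"
proof -
  have cases: "(i, j) \<in> v \<and> 1 \<le> i \<and> i < j \<and> j \<le> n
      \<or> n < i \<and> i < j \<and> j \<le> n + n' \<and> (i - n, j - n) \<in> v'"
    if "(i, j) \<in> v \<union> shift_rel n v'" for i j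
    using that nesting_rel_bounds[OF v, of i j] nesting_rel_bounds[OF v', of "i - n" "j - n"]
    by (auto simp: mem_shift_rel)
  show ?thesis
  proof (rule nesting_relI)
    fix i j assume "(i, j) \<in> v \<union> shift_rel n v'"
    then show "1 \<le> i \<and> i < j \<and> j \<le> n + n'" using cases[of i j] by auto
  next
    fix i j j' assume "(i, j) \<in> v \<union> shift_rel n v'" "(i, j') \<in> v \<union> shift_rel n v'"
    then show "j = j'"
      using cases[of i j] cases[of i j'] nesting_rel_unique_return[OF v, of i j j']
        nesting_rel_unique_return[OF v', of "i - n" "j - n" "j' - n"] by auto
  next
    fix i i' j assume "(i, j) \<in> v \<union> shift_rel n v'" "(i', j) \<in> v \<union> shift_rel n v'"
    then show "i = i'"
      using cases[of i j] cases[of i' j] nesting_rel_unique_call[OF v, of i j i']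
        nesting_rel_unique_call[OF v', of "i - n" "j - n" "i' - n"] by auto
  next
    fix i j i' j' assume ij: "(i, j) \<in> v \<union> shift_rel n v'" and ij': "(i', j') \<in> v
        \<union> shift_rel n v'"
      and "i < i'"
    with cases[OF ij] cases[OF ij'] show "j < i' \<or> j' < j"
    proof (elim disjE conjE)
      assume "n < i" "n < i'" "i < i'" "(i - n, j - n) \<in> v'" "(i' - n, j' - n) \<in> v'"
      then have "j - n < i' - n \<or> j' - n < j - n" by (intro nesting_rel_nested[OF v']) auto
      then show ?thesis by linarith
    qed (use nesting_rel_nested[OF v] in auto)
  qed
qed

lemma nesting_rel_wrap:
  assumes v: "nesting_rel n v"
  shows "nesting_rel (n + 2) (insert (1, n + 2) (shift_rel 1 v))"
proof -
  have cases: "i = 1 \<and> j = n + 2 \<or> 1 < i \<and> i < j \<and> j \<le> n + 1 \<and> (i - 1,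
      j - 1) \<in> v"
    if "(i, j) \<in> insert (1, n + 2) (shift_rel 1 v)" for i j
    using that nesting_rel_bounds[OF v, of "i - 1" "j - 1"] by (auto simp: mem_shift_rel)
  show ?thesis
  proof (rule nesting_relI)
    fix i j assume "(i, j) \<in> insert (1, n + 2) (shift_rel 1 v)"
    then show "1 \<le> i \<and> i < j \<and> j \<le> n + 2" using cases[of i j] by auto
  next
    fix i j j' assume "(i, j) \<in> insert (1, n + 2) (shift_rel 1 v)" "(i, j') \<in> insert (1, n
        + 2) (shift_rel 1 v)"
    then show "j = j'"
      using cases[of i j] cases[of i j'] nesting_rel_unique_return[OF v, of "i - 1" "j - 1" "j' - 1"]
      by auto
  next
    fix i i' j assume "(i, j) \<in> insert (1, n + 2) (shift_rel 1 v)" "(i', j) \<in> insert (1, n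
        + 2) (shift_rel 1 v)"
    then show "i = i'"
      using cases[of i j] cases[of i' j] nesting_rel_unique_call[OF v, of "i - 1" "j - 1" "i' - 1"]
      by auto
  next
    fix i j i' j' assume ij: "(i, j) \<in> insert (1, n + 2) (shift_rel 1 v)"
      and ij': "(i', j') \<in> insert (1, n + 2) (shift_rel 1 v)" and "i < i'"
    with cases[OF ij] cases[OF ij'] show "j < i' \<or> j' < j"
    proof (elim disjE conjE)
      assume "1 < i" "i < i'" "(i - 1, j - 1) \<in> v" "(i' - 1, j' - 1) \<in> v"
      then have "j - 1 < i' - 1 \<or> j' - 1 < j - 1" by (intro nesting_rel_nested[OF v]) auto
      then show ?thesis by linarith
    qed auto
  qed
qed

lemma nesting_rel_restrict:
  assumes v: "nesting_rel n v"
  shows "nesting_rel (b - a) (restrict_rel a b v)"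
proof (rule nesting_relI)
  fix i j assume "(i, j) \<in> restrict_rel a b v"
  then show "1 \<le> i \<and> i < j \<and> j \<le> b - a"
    using nesting_rel_bounds[OF v, of "i + a" "j + a"] by (auto simp: mem_restrict_rel)
next
  fix i j j' assume "(i, j) \<in> restrict_rel a b v" "(i, j') \<in> restrict_rel a b v"
  then show "j = j'"
    using nesting_rel_unique_return[OF v, of "i + a" "j + a" "j' + a"] by (simp add: mem_restrict_rel)
next
  fix i i' j assume "(i, j) \<in> restrict_rel a b v" "(i', j) \<in> restrict_rel a b v"
  then show "i = i'"
    using nesting_rel_unique_call[OF v, of "i + a" "j + a" "i' + a"] by (simp add: mem_restrict_rel)
next
  fix i j i' j' assume "(i, j) \<in> restrict_rel a b v" "(i', j') \<in> restrict_rel a b v" "i < i'"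
  then show "j < i' \<or> j' < j"
    using nesting_rel_nested[OF v, of "i + a" "j + a" "i' + a" "j' + a"] by (simp add: mem_restrict_rel)
qed

fun nw_of_tree :: "'d ntree \<Rightarrow> 'd nword" and nw_of_forest :: "'d ntree list
    \<Rightarrow> 'd nword" where
  "nw_of_tree (Leaf a) = ([a], {})"
| "nw_of_tree (Nest a g c) =
     (a # fst (nw_of_forest g) @ [c],
      insert (1, length (fst (nw_of_forest g)) + 2) (shift_rel 1 (snd (nw_of_forest g))))"
| "nw_of_forest [] = ([], {})"
| "nw_of_forest (x # f) =
     (fst (nw_of_tree x) @ fst (nw_of_forest f),
      snd (nw_of_tree x) \<union> shift_rel (length (fst (nw_of_tree x))) (snd (nw_of_forest f)))"

lemma length_nw_of:
  fixes x :: "'d ntree" and f :: "'d ntree list"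
  shows "length (fst (nw_of_tree x)) = tree_len x" "length (fst (nw_of_forest f)) = forest_len f"
  by (induction x and f rule: nw_of_tree_nw_of_forest.induct) auto

lemma nesting_rel_nw_of:
  fixes x :: "'d ntree" and f :: "'d ntree list"
  shows "nesting_rel (tree_len x) (snd (nw_of_tree x))"
    and "nesting_rel (forest_len f) (snd (nw_of_forest f))"
proof (induction x and f rule: nw_of_tree_nw_of_forest.induct)
  case (2 a g c)
  then show ?case using nesting_rel_wrap[of "forest_len g"] by (simp add: length_nw_of)
next
  case (4 x f)
  then show ?case using nesting_rel_append[of "tree_len x" _ "forest_len f"] by (simp add: length_nw_of)
qed (simp_all add: nesting_rel_empty)

lemma nw_of_forest_append:
  "nw_of_forest (f @ f') =
     (fst (nw_of_forest f) @ fst (nw_of_forest f'),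
      snd (nw_of_forest f) \<union> shift_rel (forest_len f) (snd (nw_of_forest f')))"
  by (induction f) (auto simp: shift_rel_Un shift_rel_shift_rel length_nw_of add.commute)

lemma nw_of_forest_Leafs: "nw_of_forest (map Leaf ws) = (ws, {})"
  by (induction ws) auto

lemma forest_len_Leafs: "forest_len (map Leaf ws) = length ws"
  by (induction ws) auto

lemma is_nw_nw_of_forest: "f \<noteq> [] \<Longrightarrow> is_nw (nw_of_forest f)"
  using length_nw_of(2)[of f] nesting_rel_nw_of(2)[of f] by (auto simp: is_nw_def)

lemma nesting_rel_no_call_at_1:
  assumes v: "nesting_rel n v" and no_call: "\<nexists>j. (1, j) \<in> v"
  shows "v = shift_rel 1 (restrict_rel 1 n v)"
proof (rule set_eqI, clarify)
  fix i j
  show "(i, j) \<in> v \<longleftrightarrow> (i, j) \<in> shift_rel 1 (restrict_rel 1 n v)"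
    using nesting_rel_bounds[OF v, of i j] no_call
    by (cases "i = 1") (auto simp: mem_shift_rel mem_restrict_rel)
qed

lemma nesting_rel_call_at_1:
  assumes v: "nesting_rel n v" and call: "(1, j) \<in> v"
  shows "v = insert (1, j) (shift_rel 1 (restrict_rel 1 (j - 1) v)) \<union> shift_rel j
      (restrict_rel j n v)"
proof (rule set_eqI, clarify)
  fix i l
  have "l = j" if "(1, l) \<in> v" using nesting_rel_unique_return[OF v that call] .
  moreover have "j < i \<or> l < j" if "(i, l) \<in> v" "1 < i"
    using nesting_rel_nested[OF v call that(1) that(2)] .
  ultimately show "(i, l) \<in> v \<longleftrightarrow>
      (i, l) \<in> insert (1, j) (shift_rel 1 (restrict_rel 1 (j - 1) v)) \<union> shift_rel j
          (restrict_rel j n v)"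
    using nesting_rel_bounds[OF v, of i l] call
    by (cases "i = 1") (auto simp: mem_shift_rel mem_restrict_rel)
qed

lemma nw_of_forest_surj_aux: "nesting_rel (length w) v \<Longrightarrow> \<exists>f. nw_of_forest f
    = (w, v)"
proof (induction "length w" arbitrary: w v rule: less_induct)
  case less
  note v = less.prems
  show ?case
  proof (cases w)
    case Nil
    then show ?thesis using nesting_rel_bounds[OF v] by (intro exI[of _ "[]"]) fastforce
  next
    case (Cons a w')
    show ?thesis
    proof (cases "\<exists>j. (1, j) \<in> v")
      case False
      have "nesting_rel (length w') (restrict_rel 1 (length w) v)"
        using nesting_rel_restrict[OF v, where a=1 and b="length w"] Cons by simp
      then obtain f where "nw_of_forest f = (w', restrict_rel 1 (length w) v)"
        using less.hyps Cons by auto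
      then have "nw_of_forest (Leaf a # f) = (w, v)"
        using nesting_rel_no_call_at_1[OF v False] Cons by simp
      then show ?thesis by blast
    next
      case True
      then obtain j where call: "(1, j) \<in> v" by blast
      then have j: "2 \<le> j" "j \<le> length w" using nesting_rel_bounds[OF v] by fastforce+
      define wg where "wg = take (j - 2) w'"
      define wf where "wf = drop (j - 1) w'"
      have w': "w' = wg @ [w' ! (j - 2)] @ wf"
        using id_take_nth_drop[of "j - 2" w'] j Cons
        by (simp add: wg_def wf_def Suc_diff_Suc numeral_2_eq_2)
      have "nesting_rel (length wg) (restrict_rel 1 (j - 1) v)"
        using nesting_rel_restrict[OF v, where a=1 and b="j - 1"] j Cons
        by (simp add: wg_def numeral_2_eq_2)
      then obtain g where g: "nw_of_forest g = (wg, restrict_rel 1 (j - 1) v)"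
        using less.hyps j Cons by (fastforce simp: wg_def)
      have "nesting_rel (length wf) (restrict_rel j (length w) v)"
        using nesting_rel_restrict[OF v, where a=j and b="length w"] j Cons by (simp add: wf_def)
      then obtain f where f: "nw_of_forest f = (wf, restrict_rel j (length w) v)"
        using less.hyps j Cons by (fastforce simp: wf_def)
      have "length wg + 2 = j" using j Cons by (simp add: wg_def)
      then have "nw_of_forest (Nest a g (w' ! (j - 2)) # f) = (w, v)"
        using g f w' Cons nesting_rel_call_at_1[OF v call] by simp
      then show ?thesis by blast
    qed
  qed
qed

lemma nw_of_forest_surj:
  assumes "is_nw nw"
  shows "\<exists>f. f \<noteq> [] \<and> nw_of_forest f = nw"
proof -
  obtain f where f: "nw_of_forest f = nw"
    using nw_of_forest_surj_aux[of "fst nw" "snd nw"] assms by (auto simp: is_nw_def)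
  moreover have "f \<noteq> []" using f assms by (auto simp: is_nw_def)
  ultimately show ?thesis by blast
qed

declare phi.simps[simp del]

lemma forest_Leafs_prefix:
  obtains ws where "f = map Leaf ws"
  | ws a g c f' where "f = map Leaf ws @ Nest a g c # f'"
proof (induction f arbitrary: thesis)
  case (Cons x f)
  show ?case
  proof (cases x)
    case (Leaf a)
    show ?thesis
      by (rule Cons.IH) (use Cons.prems Leaf in \<open>metis list.simps(9) append_Cons\<close>)+
  next
    case (Nest a g c)
    then show ?thesis using Cons.prems(2)[of "[]"] by simp
  qed
qed (use list.simps(8) in blast)

lemma nw_factor_eq_restrict_rel:
  assumes "1 \<le> i" and "\<And>k l. (k, l) \<in> v \<Longrightarrow> k < l"
  shows "nw_factor (w, v) i j = (take (Suc j - i) (drop (i - 1) w), restrict_rel (i - 1) j v)"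
proof -
  have "{(k + 1 - i, l + 1 - i) | k l. (k, l) \<in> v \<and> i \<le> k \<and> l \<le> j} =
      restrict_rel (i - 1) j v"
  proof (rule set_eqI, clarify)
    fix x y
    show "(x, y) \<in> {(k + 1 - i, l + 1 - i) | k l. (k, l) \<in> v \<and> i \<le> k \<and> l \<le> j}
        \<longleftrightarrow> (x, y) \<in> restrict_rel (i - 1) j v"
    proof
      assume "(x, y) \<in> {(k + 1 - i, l + 1 - i) | k l. (k, l) \<in> v \<and> i \<le> k \<and> l
          \<le> j}"
      then obtain k l where "(k, l) \<in> v" "i \<le> k" "l \<le> j" "x = k + 1 - i" "y = l + 1 -
          i" by blast
      then show "(x, y) \<in> restrict_rel (i - 1) j v"
        using assms by (force simp: mem_restrict_rel)
    next
      assume "(x, y) \<in> restrict_rel (i - 1) j v"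
      then show "(x, y) \<in> {(k + 1 - i, l + 1 - i) | k l. (k, l) \<in> v \<and> i \<le> k \<and>
          l \<le> j}"
        using assms(1) by (intro CollectI exI[of _ "x + (i - 1)"] exI[of _ "y + (i - 1)"])
          (auto simp: mem_restrict_rel)
    qed
  qed
  then show ?thesis by (simp add: nw_factor_def)
qed

lemma nw_of_forest_Leafs_Nest:
  assumes "m = length ws" and "G = forest_len g"
  shows "nw_of_forest (map Leaf ws @ Nest a g c # f) =
    (ws @ (a # fst (nw_of_forest g) @ [c]) @ fst (nw_of_forest f),
     insert (m + 1, m + G + 2)
       (shift_rel (m + 1) (snd (nw_of_forest g)) \<union> shift_rel (m + G + 2) (snd (nw_of_forest f))))"
  using assms
  by (simp add: nw_of_forest_append nw_of_forest_Leafs forest_len_Leafs shift_rel_Un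
      shift_rel_insert shift_rel_shift_rel length_nw_of ac_simps)

lemma phi_nw_of_forest_Leafs_Nest:
  "phi b (nw_of_forest (map Leaf ws @ Nest a g c # f)) =
     tfold (top b) (map tsing ws
       @ [tfold (top (\<not> b)) ([tsing a] @ (if g = [] then [] else [phi (\<not> b) (nw_of_forest
           g)]) @ [tsing c])]
       @ (if f = [] then [] else [phi b (nw_of_forest f)]))"
proof -
  define m G F where "m = length ws" and "G = forest_len g" and "F = forest_len f"
  obtain wg vg where g: "nw_of_forest g = (wg, vg)" by fastforce
  obtain wf vf where f: "nw_of_forest f = (wf, vf)" by fastforce
  have len: "length wg = G" "length wf = F"
    using length_nw_of(2)[of g] length_nw_of(2)[of f] g f G_def F_def by simp_all
  have vg: "1 \<le> k \<and> k < l \<and> l \<le> G" if "(k, l) \<in> vg" for k l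
    using nesting_rel_bounds[OF nesting_rel_nw_of(2)[of g]] that g G_def by auto
  have vf: "1 \<le> k \<and> k < l \<and> l \<le> F" if "(k, l) \<in> vf" for k l
    using nesting_rel_bounds[OF nesting_rel_nw_of(2)[of f]] that f F_def by auto
  define W where "W = ws @ (a # wg @ [c]) @ wf"
  define V where "V = insert (m + 1, m + G + 2) (shift_rel (m + 1) vg \<union> shift_rel (m + G + 2) vf)"
  have nw: "nw_of_forest (map Leaf ws @ Nest a g c # f) = (W, V)"
    using nw_of_forest_Leafs_Nest[OF m_def G_def] g f by (simp add: W_def V_def)
  have len_W: "length W = m + G + 2 + F" using len by (simp add: W_def m_def)
  have V_lt: "k < l" if "(k, l) \<in> V" for k l
    using nesting_rel_bounds[OF nesting_rel_nw_of(2)] that nw by (metis snd_conv)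
  have first_call: "(LEAST i. \<exists>j. (i, j) \<in> V) = m + 1"
    by (rule Least_equality) (auto simp: V_def mem_shift_rel)
  have its_return: "(THE j. (m + 1, j) \<in> V) = m + G + 2"
    by (rule the_equality) (auto simp: V_def mem_shift_rel dest: vg)
  have inner: "nw_factor (W, V) (m + 2) (m + G + 1) = nw_of_forest g"
  proof -
    have "restrict_rel (m + 1) (m + G + 1) V = vg"
      by (auto simp: set_eq_iff V_def mem_restrict_rel mem_shift_rel dest: vg)
    moreover have "take G (drop (m + 1) W) = wg" using len by (simp add: W_def m_def)
    ultimately show ?thesis using nw_factor_eq_restrict_rel[of "m + 2" V W] V_lt g by simp
  qed
  have tail: "nw_factor (W, V) (m + G + 3) (length W) = nw_of_forest f"
  proof -
    have "restrict_rel (m + G + 2) (m + G + 2 + F) V = vf"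
      by (auto simp: set_eq_iff V_def mem_restrict_rel mem_shift_rel dest: vg vf)
    moreover have "take F (drop (m + G + 2) W) = wf" using len by (simp add: W_def m_def)
    ultimately show ?thesis
      using nw_factor_eq_restrict_rel[of "m + G + 3" V W] V_lt len_W f by (simp add: numeral_3_eq_3
          len(2)[symmetric])
  qed
  have letters: "take m W = ws" "W ! m = a" "W ! (m + G + 1) = c"
    using len by (auto simp: W_def m_def nth_append)
  have "phi b (W, V) = tfold (top b) (map tsing ws
       @ [tfold (top (\<not> b)) ([tsing a] @ (if g = [] then [] else [phi (\<not> b) (nw_of_forest
           g)]) @ [tsing c])]
       @ (if f = [] then [] else [phi b (nw_of_forest f)]))"
    apply (subst phi.simps)
    using first_call its_return len_W letters inner tail G_def F_def
    by (simp add: V_def Let_def numeral_2_eq_2 numeral_3_eq_3 Suc_le_eq)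
  then show ?thesis using nw by simp
qed

lemma phi_nw_of_forest: "f \<noteq> [] \<Longrightarrow> phi b (nw_of_forest f) = enc_forest b f"
proof (induction "forest_len f" arbitrary: f b rule: less_induct)
  case less
  show ?case
  proof (cases f rule: forest_Leafs_prefix)
    case (1 ws)
    then show ?thesis
      by (simp add: phi.simps nw_of_forest_Leafs enc_forest.simps comp_def)
  next
    case (2 ws a g c f')
    have "g \<noteq> [] \<Longrightarrow> phi (\<not> b) (nw_of_forest g) = enc_forest (\<not> b) g"
      and "f' \<noteq> [] \<Longrightarrow> phi b (nw_of_forest f') = enc_forest b f'"
      using less.hyps 2 by (simp_all add: forest_len_Leafs)
    then have "phi b (nw_of_forest f) = tfold (top b) (map tsing ws @ [enc_tree b (Nest a g c)]
        @ (if f' = [] then [] else [enc_forest b f']))"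
      using 2 by (simp add: phi_nw_of_forest_Leafs_Nest)
    also have "\<dots> = tfold (top b) (map (enc_tree b) f)"
      using 2 by (simp add: enc_forest.simps tfold_top_flatten[of _ b "map tsing ws @ [enc_tree b
          (Nest a g c)]" "[]", simplified] comp_def)
    finally show ?thesis by (simp add: enc_forest.simps)
  qed
qed

section \<open>Weights of nested word automata along forests\<close>

definition wnwa_wt :: "('d, 'k::comm_semiring_1) wnwa \<Rightarrow> 'd nword \<Rightarrow> nat list
    \<Rightarrow> 'k" where
  "wnwa_wt N nw qs = (\<Prod>j \<in> {1..length (fst nw)}. wnwa_step N nw qs j)"

lemma prod_atLeast1_atMost_add:
  fixes a b :: nat
  shows "prod g {1..a + b} = prod g {1..a} * prod (\<lambda>j. g (j + a)) {1..b}"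
  using prod.ub_add_nat[of 1 a g b] prod.shift_bounds_cl_nat_ivl[of g 1 a b] by (simp add: add.commute)

text \<open>The step weights only depend on the neighbourhood of a position: if the window
  \<open>{d<..d+n}\<close> of \<open>(w', v')\<close> is a copy of \<open>(w, v)\<close> that no pair of \<open>v'\<close> crosses, the
  weights agree there.\<close>
lemma wnwa_step_shift:
  assumes v: "nesting_rel n v" and v': "nesting_rel n' v'"
    and call: "\<And>k. (j + d, k) \<in> v' \<longleftrightarrow> d < k \<and> (j, k - d) \<in> v"
    and ret: "\<And>i. (i, j + d) \<in> v' \<longleftrightarrow> d < i \<and> (i - d, j) \<in> v"
    and letter: "w' ! (j + d - 1) = w ! (j - 1)" and j: "1 \<le> j" and len: "j + d < length qs"
  shows "wnwa_step N (w', v') qs (j + d) = wnwa_step N (w, v) (drop d qs) j"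
proof -
  have "(\<exists>k. (j + d, k) \<in> v') \<longleftrightarrow> (\<exists>k. (j, k) \<in> v)"
  proof
    assume "\<exists>k. (j, k) \<in> v"
    then obtain k where k: "(j, k) \<in> v" ..
    then have "(j + d, k + d) \<in> v'" using call[of "k + d"] nesting_rel_bounds[OF v k] by simp
    then show "\<exists>k. (j + d, k) \<in> v'" ..
  qed (use call in blast)
  moreover have "(\<exists>i. (i, j + d) \<in> v') \<longleftrightarrow> (\<exists>i. (i, j) \<in> v)"
  proof
    assume "\<exists>i. (i, j) \<in> v"
    then obtain i where i: "(i, j) \<in> v" ..
    then have "(i + d, j + d) \<in> v'" using ret[of "i + d"] nesting_rel_bounds[OF v i] by simp
    then show "\<exists>i. (i, j + d) \<in> v'" ..
  qed (use ret in blast)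
  moreover have "qs ! ((THE i'. (i', j + d) \<in> v') - 1) = drop d qs ! ((THE i'. (i', j) \<in> v) - 1)"
    if "(i, j) \<in> v" for i
  proof -
    have "1 \<le> i" using nesting_rel_bounds[OF v that] by simp
    then have i': "(i + d, j + d) \<in> v'" using ret[of "i + d"] that by simp
    show ?thesis
      using nesting_rel_the_call[OF v' i'] nesting_rel_the_call[OF v that] \<open>1 \<le> i\<close> len
        nesting_rel_bounds[OF v that] by (simp add: add.commute)
  qed
  ultimately show ?thesis
    using letter j len by (auto simp: wnwa_step_def add.commute)
qed

lemma wnwa_wt_append:
  assumes v: "nesting_rel (length w) v" and v': "nesting_rel (length w') v'"
    and len: "length w + length w' < length qs"
  shows "wnwa_wt N (w @ w', v \<union> shift_rel (length w) v') qs
    = wnwa_wt N (w, v) qs * wnwa_wt N (w', v') (drop (length w) qs)"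
proof -
  let ?nw = "(w @ w', v \<union> shift_rel (length w) v')"
  have vv': "nesting_rel (length w + length w') (v \<union> shift_rel (length w) v')"
    by (rule nesting_rel_append[OF v v'])
  have left: "wnwa_step N ?nw qs j = wnwa_step N (w, v) qs j"
    if j: "1 \<le> j" "j \<le> length w" for j
  proof -
    have "wnwa_step N ?nw qs (j + 0) = wnwa_step N (w, v) (drop 0 qs) j"
    proof (rule wnwa_step_shift[OF v vv'])
      show "(j + 0, k) \<in> v \<union> shift_rel (length w) v' \<longleftrightarrow> 0 < k \<and>
          (j, k - 0) \<in> v" for k
        using j nesting_rel_bounds[OF v, of j k] nesting_rel_bounds[OF v', of "j - length w" "k -
            length w"]
        by (auto simp: mem_shift_rel)
      show "(i, j + 0) \<in> v \<union> shift_rel (length w) v' \<longleftrightarrow> 0 < i \<and>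
          (i - 0, j) \<in> v" for i
        using j nesting_rel_bounds[OF v, of i j] nesting_rel_bounds[OF v', of "i - length w" "j -
            length w"]
        by (auto simp: mem_shift_rel)
    qed (use j len in \<open>auto simp: nth_append\<close>)
    then show ?thesis by simp
  qed
  have right: "wnwa_step N ?nw qs (j + length w) = wnwa_step N (w', v') (drop (length w) qs) j"
    if j: "1 \<le> j" "j \<le> length w'" for j
  proof (rule wnwa_step_shift[OF v' vv'])
    show "(j + length w, k) \<in> v \<union> shift_rel (length w) v' \<longleftrightarrow> length w
        < k \<and> (j, k - length w) \<in> v'" for k
      using nesting_rel_bounds[OF v, of "j + length w" k] nesting_rel_bounds[OF v', of j "k - length w"]
      by (auto simp: mem_shift_rel)
    show "(i, j + length w) \<in> v \<union> shift_rel (length w) v' \<longleftrightarrow> length w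
        < i \<and> (i - length w, j) \<in> v'" for i
      using j nesting_rel_bounds[OF v, of i "j + length w"] nesting_rel_bounds[OF v', of "i -
          length w" j]
      by (auto simp: mem_shift_rel)
  qed (use j len in \<open>auto simp: nth_append\<close>)
  have "wnwa_wt N ?nw qs = (\<Prod>j \<in> {1..length w}. wnwa_step N ?nw qs j)
      * (\<Prod>j \<in> {1..length w'}. wnwa_step N ?nw qs (j + length w))"
    unfolding wnwa_wt_def fst_conv length_append by (rule prod_atLeast1_atMost_add)
  also have "\<dots> = wnwa_wt N (w, v) qs * wnwa_wt N (w', v') (drop (length w) qs)"
    unfolding wnwa_wt_def fst_conv by (intro arg_cong2[where f = "(*)"] prod.cong refl left right) auto
  finally show ?thesis .
qed

lemma wnwa_wt_wrap:
  assumes v: "nesting_rel (length w) v" and len: "length w + 2 < length qs"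
  shows "wnwa_wt N (a # w @ [c], insert (1, length w + 2) (shift_rel 1 v)) qs
    = nwa_call N (qs ! 0) a (qs ! 1) * wnwa_wt N (w, v) (drop 1 qs)
      * nwa_ret N (qs ! (length w + 1)) (qs ! 0) c (qs ! (length w + 2))"
proof -
  let ?nw = "(a # w @ [c], insert (1, length w + 2) (shift_rel 1 v))"
  have v': "nesting_rel (length w + 2) (insert (1, length w + 2) (shift_rel 1 v))"
    by (rule nesting_rel_wrap[OF v])
  have first: "wnwa_step N ?nw qs 1 = nwa_call N (qs ! 0) a (qs ! 1)"
    by (auto simp: wnwa_step_def)
  have "\<nexists>k. (length w + 2, k) \<in> insert (1, length w + 2) (shift_rel 1 v)"
    by (auto simp: mem_shift_rel dest: nesting_rel_bounds[OF v])
  then have last: "wnwa_step N ?nw qs (length w + 2) = nwa_ret N (qs ! (length w + 1)) (qs ! 0) c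
      (qs ! (length w + 2))"
    using nesting_rel_the_call[OF v', of 1 "length w + 2"] by (auto simp: wnwa_step_def nth_append)
  have inner: "wnwa_step N ?nw qs (j + 1) = wnwa_step N (w, v) (drop 1 qs) j"
    if j: "1 \<le> j" "j \<le> length w" for j
  proof (rule wnwa_step_shift[OF v v'])
    show "(j + 1, k) \<in> insert (1, length w + 2) (shift_rel 1 v) \<longleftrightarrow> 1 < k
        \<and> (j, k - 1) \<in> v" for k
      using j nesting_rel_bounds[OF v, of j "k - 1"] by (auto simp: mem_shift_rel)
    show "(i, j + 1) \<in> insert (1, length w + 2) (shift_rel 1 v) \<longleftrightarrow> 1 < i
        \<and> (i - 1, j) \<in> v" for i
      using j nesting_rel_bounds[OF v, of "i - 1" j] by (auto simp: mem_shift_rel)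
  qed (use j len in \<open>auto simp: nth_append\<close>)
  have "wnwa_wt N ?nw qs = wnwa_step N ?nw qs 1
      * ((\<Prod>j \<in> {1..length w}. wnwa_step N ?nw qs (j + 1)) * wnwa_step N ?nw qs (length w + 2))"
    using prod_atLeast1_atMost_add[of "wnwa_step N ?nw qs" 1 "Suc (length w)"]
    by (simp add: wnwa_wt_def ac_simps)
  also have "(\<Prod>j \<in> {1..length w}. wnwa_step N ?nw qs (j + 1)) = wnwa_wt N (w, v) (drop 1 qs)"
    unfolding wnwa_wt_def fst_conv by (intro prod.cong refl inner) auto
  finally show ?thesis using first last by (simp add: ac_simps)
qed

lemma wnwa_wt_nw_of_Nest:
  assumes "forest_len g + 2 < length qs"
  shows "wnwa_wt N (nw_of_tree (Nest a g c)) qs = nwa_call N (qs ! 0) a (qs ! 1)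
    * wnwa_wt N (nw_of_forest g) (drop 1 qs) * nwa_ret N (qs ! (forest_len g + 1)) (qs ! 0) c (qs !
        (forest_len g + 2))"
  using wnwa_wt_wrap[OF nesting_rel_nw_of(2)[of g, folded length_nw_of(2)], of qs N a c] assms
  by (simp add: length_nw_of)

lemma wnwa_wt_nw_of_forest_Nil: "wnwa_wt N (nw_of_forest []) qs = 1"
  by (simp add: wnwa_wt_def)

lemma wnwa_wt_nw_of_forest_Cons:
  assumes "forest_len (x # f) < length qs"
  shows "wnwa_wt N (nw_of_forest (x # f)) qs = wnwa_wt N (nw_of_tree x) qs * wnwa_wt N
      (nw_of_forest f) (drop (tree_len x) qs)"
  using wnwa_wt_append[OF nesting_rel_nw_of(1)[of x, folded length_nw_of(1)]
      nesting_rel_nw_of(2)[of f, folded length_nw_of(2)], of qs N] assms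
  by (simp add: length_nw_of)

section \<open>The parenthesizing automaton of a nested word automaton\<close>

text \<open>A state \<open>state k p q s\<close> of the parenthesizing automaton is horizontal iff \<open>k\<close> and
  records the state \<open>q\<close> of the nested word automaton together with the state \<open>s\<close> of the
  nested word automaton before the call of the enclosing level (\<open>0\<close> at top level).  The phase
  \<open>p\<close> is \<open>0\<close> between an opening parenthesis and the call letter, \<open>2\<close> between the return
  letter and the closing parenthesis, and \<open>1\<close> otherwise.\<close>
definition state :: "bool \<Rightarrow> nat \<Rightarrow> nat \<Rightarrow> nat \<Rightarrow> nat" where
  "state k p q s = prod_encode (prod_encode ((if k then 0 else 3) + p, q), s)"

definition state_code :: "nat \<Rightarrow> nat" where
  "state_code n = fst (prod_decode (fst (prod_decode n)))"
definition kind :: "nat \<Rightarrow> bool" where "kind n = (state_code n < 3)"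
definition phase :: "nat \<Rightarrow> nat" where "phase n = state_code n mod 3"
definition nstate :: "nat \<Rightarrow> nat" where "nstate n = snd (prod_decode (fst (prod_decode n)))"
definition stack :: "nat \<Rightarrow> nat" where "stack n = snd (prod_decode n)"

lemma decode_state[simp]:
  assumes "p < 3"
  shows "kind (state k p q s) = k" "phase (state k p q s) = p" "nstate (state k p q s) = q" "stack
      (state k p q s) = s"
  using assms by (auto simp: state_def kind_def phase_def nstate_def stack_def state_code_def)

lemma state_eq_iff[simp]: "p < 3 \<Longrightarrow> p' < 3 \<Longrightarrow> state k p q s = state
    k' p' q' s' \<longleftrightarrow> k = k' \<and> p = p' \<and> q = q' \<and> s = s'"
  by (auto simp: state_def split: if_splits)

context
  fixes N :: "('d, 'k::comm_semiring_1) wnwa" and b0 :: bool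
begin

definition stack_syms :: "nat set" where "stack_syms = insert 0 (nwa_Q N)"

definition states :: "bool \<Rightarrow> nat set" where
  "states k = {state k p q s | p q s. p < 3 \<and> q \<in> nwa_Q N \<and> s \<in> stack_syms}"

definition tr_mu :: "nat \<Rightarrow> 'd \<Rightarrow> nat \<Rightarrow> 'k" where
  "tr_mu x a y = (if nstate x \<in> nwa_Q N \<and> nstate y \<in> nwa_Q N \<and> stack x = stack y then
      (if phase x = 0 \<and> phase y = 1 then nwa_call N (nstate x) a (nstate y)
       else if phase x = 1 \<and> phase y = 1 then nwa_int N (nstate x) a (nstate y)
       else if phase x = 1 \<and> phase y = 2 then nwa_ret N (nstate x) (stack x) a (nstate y)
       else 0) else 0)"

definition tr_op :: "nat \<Rightarrow> nat \<Rightarrow> nat \<Rightarrow> 'k" where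
  "tr_op x s y = (if phase x = 1 \<and> phase y = 0 \<and> s = stack x \<and> nstate y = nstate x
      \<and> stack y = nstate x then 1 else 0)"

definition tr_cl :: "nat \<Rightarrow> nat \<Rightarrow> nat \<Rightarrow> 'k" where
  "tr_cl x s y = (if phase x = 2 \<and> phase y = 1 \<and> s = stack y \<and> nstate y = nstate x
      then 1 else 0)"

definition init_wt :: "nat \<Rightarrow> 'k" where
  "init_wt x = (if x \<in> states b0 \<and> phase x = 1 \<and> stack x = 0 then nwa_iota N (nstate
      x) else 0)"

definition fin_wt :: "nat \<Rightarrow> 'k" where
  "fin_wt x = (if x \<in> states b0 \<and> phase x = 1 \<and> stack x = 0 then nwa_kappa N (nstate
      x) else 0)"

definition wpa_of_nwa :: "('d, 'k) wpa" where
  "wpa_of_nwa = \<lparr>pa_H = states True, pa_V = states False, pa_Om = stack_syms, pa_mu = tr_mu,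
      pa_op = tr_op, pa_cl = tr_cl,
         pa_lam = init_wt, pa_gam = fin_wt\<rparr>"

lemma wpa_of_nwa_simps[simp]: "pa_H wpa_of_nwa = states True" "pa_V wpa_of_nwa = states
    False" "pa_Om wpa_of_nwa = stack_syms" "pa_mu wpa_of_nwa = tr_mu"
  "pa_op wpa_of_nwa = tr_op" "pa_cl wpa_of_nwa = tr_cl" "pa_lam wpa_of_nwa = init_wt" "pa_gam
      wpa_of_nwa = fin_wt"
  by (simp_all add: wpa_of_nwa_def)

lemma state_in_states: "p < 3 \<Longrightarrow> state k p q s \<in> states k' \<longleftrightarrow>
    k = k' \<and> q \<in> nwa_Q N \<and> s \<in> stack_syms"
proof
  assume p: "p < 3" and "state k p q s \<in> states k'"
  then obtain p' q' s' where e: "state k p q s = state k' p' q' s'" "p' < 3" "q' \<in> nwa_Q N" "s'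
      \<in> stack_syms"
    by (auto simp: states_def)
  then have "k = k' \<and> p = p' \<and> q = q' \<and> s = s'" using state_eq_iff[OF p e(2)] by simp
  then show "k = k' \<and> q \<in> nwa_Q N \<and> s \<in> stack_syms" using e by simp
qed (auto simp: states_def)

lemma states_decode: "x \<in> states k \<Longrightarrow> x = state (kind x) (phase x) (nstate x)
    (stack x) \<and> kind x = k \<and> phase x < 3 \<and> nstate x \<in> nwa_Q N \<and> stack x
        \<in> stack_syms"
  by (auto simp: states_def)

lemma states_disjoint: "states True \<inter> states False = {}"
proof (rule equals0I)
  fix x assume "x \<in> states True \<inter> states False"
  then have "kind x" "\<not> kind x" using states_decode[of x True] states_decode[of x False] by auto
  then show False by simp
qed

lemma states_finite: "finite (nwa_Q N) \<Longrightarrow> finite (states k)"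
proof -
  assume f: "finite (nwa_Q N)"
  have "states k \<subseteq> (\<lambda>(p, q, s). state k p q s) ` ({..<3} \<times> nwa_Q N
      \<times> stack_syms)"
  proof
    fix x assume "x \<in> states k"
    then obtain p q s where "x = state k p q s" "p < 3" "q \<in> nwa_Q N" "s \<in> stack_syms" by
        (auto simp: states_def)
    then show "x \<in> (\<lambda>(p, q, s). state k p q s) ` ({..<3} \<times> nwa_Q N \<times>
        stack_syms)"
      by (intro rev_image_eqI[of "(p, q, s)"]) auto
  qed
  moreover have "finite ((\<lambda>(p, q, s). state k p q s) ` ({..<3} \<times> nwa_Q N \<times>
      stack_syms))"
    using f by (simp add: stack_syms_def)
  ultimately show ?thesis by (rule finite_subset)
qed

lemma wpa_ok_wpa_of_nwa: "finite (nwa_Q N) \<Longrightarrow> wpa_ok wpa_of_nwa"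
  by (simp add: wpa_ok_def states_finite states_disjoint stack_syms_def)

end

fun tree_run :: "bool \<Rightarrow> nat \<Rightarrow> 'd ntree \<Rightarrow> nat list \<Rightarrow>
    'd blk"
and forest_run :: "bool \<Rightarrow> nat \<Rightarrow> 'd ntree list \<Rightarrow> nat list
    \<Rightarrow> 'd blk list" where
  "tree_run k s (Leaf a) qs = Atm (state k 1 (qs ! 0) s) a (state k 1 (qs ! 1) s)"
| "tree_run k s (Nest a g c) qs = Brk (state k 1 (qs ! 0) s) s
     ([Atm (state (\<not> k) 0 (qs ! 0) (qs ! 0)) a (state (\<not> k) 1 (qs ! 1) (qs ! 0))]
      @ forest_run (\<not> k) (qs ! 0) g (drop 1 qs)
      @ [Atm (state (\<not> k) 1 (qs ! (forest_len g + 1)) (qs ! 0)) c (state (\<not> k) 2 (qs !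
          (forest_len g + 2)) (qs ! 0))])
     (state k 1 (qs ! (forest_len g + 2)) s)"
| "forest_run k s [] qs = []"
| "forest_run k s (x # f) qs = tree_run k s x qs # forest_run k s f (drop (tree_len x) qs)"

lemma length_forest_run[simp]: "length (forest_run k s f qs) = length f"
  by (induction f arbitrary: qs) auto

lemma forest_run_eq_Nil_iff[simp]: "forest_run k s f qs = [] \<longleftrightarrow> f = []"
  by (cases f) auto

lemma runs_cong:
  fixes x :: "'d ntree" and f :: "'d ntree list"
  shows "(\<And>i. i \<le> tree_len x \<Longrightarrow> qs1 ! i = qs2 ! i) \<Longrightarrow> length
      qs1 > tree_len x \<Longrightarrow> length qs2 > tree_len x \<Longrightarrow> tree_run k s x
          qs1 = tree_run k s x qs2"
  "(\<And>i. i \<le> forest_len f \<Longrightarrow> qs1 ! i = qs2 ! i) \<Longrightarrow> length qs1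
      > forest_len f \<Longrightarrow> length qs2 > forest_len f \<Longrightarrow> forest_run k s f
          qs1 = forest_run k s f qs2"
proof (induction k s x qs1 and k s f qs1 arbitrary: qs2 and qs2 rule: tree_run_forest_run.induct)
  case (1 k s a qs)
  then show ?case by simp
next
  case (2 k s a g c qs)
  have "forest_run (\<not> k) (qs ! 0) g (drop 1 qs) = forest_run (\<not> k) (qs ! 0) g (drop 1 qs2)"
  proof (rule 2(1))
    fix i assume "i \<le> forest_len g" then show "drop 1 qs ! i = drop 1 qs2 ! i" using 2(2)[of "i
        + 1"] 2(3,4) by simp
  qed (use 2 in auto)
  then show ?case using 2(2)[of 0] 2(2)[of 1] 2(2)[of "forest_len g + 1"] 2(2)[of "forest_len g +
      2"] by simp
next
  case (3 k s qs)
  then show ?case by simp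
next
  case (4 k s x f qs)
  have "tree_run k s x qs = tree_run k s x qs2" by (rule 4(1)) (use 4 in auto)
  moreover have "forest_run k s f (drop (tree_len x) qs) = forest_run k s f (drop (tree_len x) qs2)"
  proof (rule 4(2))
    fix i assume "i \<le> forest_len f" then show "drop (tree_len x) qs ! i = drop (tree_len x) qs2 ! i"
      using 4(3)[of "tree_len x + i"] 4(4,5) by simp
  qed (use 4 in auto)
  ultimately show ?case by simp
qed

lemma tree_run_ends:
  fixes x :: "'d ntree" and f :: "'d ntree list"
  shows "bini (tree_run k s x qs) = state k 1 (qs ! 0) s" "bfin (tree_run k s x qs) = state k 1 (qs
      ! tree_len x) s"
  by (cases x; simp)+

lemma forest_run_ends:
  "f \<noteq> [] \<Longrightarrow> forest_len f < length qs \<Longrightarrow> rini (forest_run k s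
      f qs) = state k 1 (qs ! 0) s"
  "f \<noteq> [] \<Longrightarrow> forest_len f < length qs \<Longrightarrow> rfin (forest_run k s
      f qs) = state k 1 (qs ! forest_len f) s"
proof -
  assume "f \<noteq> []" "forest_len f < length qs"
  then obtain x f' where f: "f = x # f'" by (cases f) auto
  show "rini (forest_run k s f qs) = state k 1 (qs ! 0) s" using f by (simp add: rini_def tree_run_ends)
next
  show "f \<noteq> [] \<Longrightarrow> forest_len f < length qs \<Longrightarrow> rfin (forest_run
      k s f qs) = state k 1 (qs ! forest_len f) s"
  proof (induction f arbitrary: qs)
    case (Cons x f)
    show ?case
    proof (cases "f = []")
      case True
      then show ?thesis by (simp add: rfin_def tree_run_ends)
    next
      case False
      have "rfin (forest_run k s f (drop (tree_len x) qs)) = state k 1 (drop (tree_len x) qs !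
          forest_len f) s"
        using Cons False by simp
      then show ?thesis using False Cons(3) by (simp add: rfin_def)
    qed
  qed simp
qed

lemma forest_run_junction:
  "forest_len f < length qs \<Longrightarrow> b \<in> set (forest_run k s f qs) \<Longrightarrow>
      \<exists>i \<le> forest_len f. bfin b = state k 1 (qs ! i) s"
proof (induction f arbitrary: qs)
  case (Cons x f)
  show ?case
  proof (cases "b = tree_run k s x qs")
    case True then show ?thesis by (intro exI[of _ "tree_len x"]) (simp add: tree_run_ends)
  next
    case False
    then have bm: "b \<in> set (forest_run k s f (drop (tree_len x) qs))" using Cons by simp
    have "forest_len f < length (drop (tree_len x) qs)" using Cons(2) by simp
    from Cons.IH[OF this bm] obtain i where "i \<le> forest_len f" "bfin b = state k 1 (drop
        (tree_len x) qs ! i) s" by blast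
    then show ?thesis using Cons(2) by (intro exI[of _ "tree_len x + i"]) simp
  qed
qed simp

lemma wpa_wt_append: "wpa_wt A (xs @ ys) = wpa_wt A xs * wpa_wt A ys"
  by (induction xs) (auto simp: mult.assoc)

lemma wpa_lab_tfold:
  "(\<forall>b \<in> set (butlast r). (bfin b \<in> pa_H A) = kk) \<Longrightarrow> wpa_lab A r =
      tfold (top kk) (map (wpa_blab A) r)"
proof (induction r)
  case (Cons b r)
  show ?case
  proof (cases r)
    case (Cons c rs)
    have h: "(bfin b \<in> pa_H A) = kk" using Cons.prems \<open>r = c # rs\<close> by simp
    have "\<forall>b \<in> set (butlast r). (bfin b \<in> pa_H A) = kk"
      using Cons.prems \<open>r = c # rs\<close> by (auto dest: in_set_butlastD)
    then have i: "wpa_lab A r = tfold (top kk) (map (wpa_blab A) r)" using Cons.IH by blast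
    have "wpa_lab A (b # c # rs) = top kk (wpa_blab A b) (wpa_lab A (c # rs))"
      using h by (cases kk) (simp_all add: top_def)
    then show ?thesis using i \<open>r = c # rs\<close> by simp
  qed simp
qed simp

context
  fixes N :: "('d, 'k::comm_semiring_1) wnwa" and b0 :: bool
begin

lemma wpa_run_runs:
  fixes x :: "'d ntree" and f :: "'d ntree list"
  shows "set qs \<subseteq> nwa_Q N \<Longrightarrow> s \<in> stack_syms N \<Longrightarrow>
      tree_len x < length qs \<Longrightarrow> wpa_run (wpa_of_nwa N b0) [tree_run k s x qs]"
    "set qs \<subseteq> nwa_Q N \<Longrightarrow> s \<in> stack_syms N \<Longrightarrow> forest_len
        f < length qs \<Longrightarrow> f \<noteq> [] \<Longrightarrow> wpa_run (wpa_of_nwa N b0)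
            (forest_run k s f qs)"
proof (induction k s x qs and k s f qs rule: tree_run_forest_run.induct)
  case (1 k s a qs)
  have l: "0 < length qs" "1 < length qs" using 1(3) by auto
  have "qs ! 0 \<in> nwa_Q N" "qs ! 1 \<in> nwa_Q N" using 1(1) nth_mem[OF l(1)] nth_mem[OF l(2)]
      by blast+
  then show ?case using 1 by (cases k) (auto intro!: wpa_run.atom simp: state_in_states)
next
  case (2 k s a g c qs)
  let ?A = "wpa_of_nwa N b0"
  have inQ: "qs ! i \<in> nwa_Q N" if "i \<le> forest_len g + 2" for i using 2(2,4) that by auto
  have inQS: "qs ! i \<in> stack_syms N" if "i \<le> forest_len g + 2" for i using inQ[OF that] by
      (simp add: stack_syms_def)
  let ?A1 = "Atm (state (\<not> k) 0 (qs ! 0) (qs ! 0)) a (state (\<not> k) 1 (qs ! 1) (qs ! 0))"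
  let ?A2 = "Atm (state (\<not> k) 1 (qs ! (forest_len g + 1)) (qs ! 0)) c (state (\<not> k) 2 (qs
      ! (forest_len g + 2)) (qs ! 0))"
  have r1: "wpa_run ?A [?A1]"
    using inQ[of 0] inQ[of 1] inQS[of 0] by (intro wpa_run.atom) (cases k; simp add: state_in_states)
  have rA2: "wpa_run ?A [?A2]"
    using inQ[of "forest_len g + 1"] inQ[of "forest_len g + 2"] inQS[of 0] by (intro wpa_run.atom)
        (cases k; simp add: state_in_states)
  have r2: "wpa_run ?A (forest_run (\<not> k) (qs ! 0) g (drop 1 qs) @ [?A2]) \<and> rini
      (forest_run (\<not> k) (qs ! 0) g (drop 1 qs) @ [?A2]) = state (\<not> k) 1 (qs ! 1) (qs ! 0)"
  proof (cases "g = []")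
    case True
    then show ?thesis using rA2 by (simp add: rini_def)
  next
    case False
    have rg: "wpa_run ?A (forest_run (\<not> k) (qs ! 0) g (drop 1 qs))"
      using 2(1)[OF _ _ _ False] 2(2,3,4) inQS[of 0] set_drop_subset[of 1 qs] by auto
    have "rfin (forest_run (\<not> k) (qs ! 0) g (drop 1 qs)) = rini [?A2]"
      using forest_run_ends(2)[OF False, of "drop 1 qs" "\<not> k" "qs ! 0"] 2(4) by (simp add: rini_def)
    then have "wpa_run ?A (forest_run (\<not> k) (qs ! 0) g (drop 1 qs) @ [?A2])" by (rule
        wpa_run.cat[OF rg rA2])
    moreover have "rini (forest_run (\<not> k) (qs ! 0) g (drop 1 qs) @ [?A2]) = state (\<not> k) 1
        (qs ! 1) (qs ! 0)"
      using forest_run_ends(1)[OF False, of "drop 1 qs" "\<not> k" "qs ! 0"] 2(4) False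
      by (cases g) (auto simp: rini_def)
    ultimately show ?thesis by simp
  qed
  have "wpa_run ?A [Brk (state k 1 (qs ! 0) s) s ([?A1] @ (forest_run (\<not> k) (qs ! 0) g (drop 1
      qs) @ [?A2])) (state k 1 (qs ! (forest_len g + 2)) s)]"
  proof (rule wpa_run.br[OF r1 r2[THEN conjunct1]])
    show "rfin [?A1] = rini (forest_run (\<not> k) (qs ! 0) g (drop 1 qs) @ [?A2])" using r2 by
        (simp add: rfin_def)
    show "s \<in> pa_Om ?A" using 2 by simp
    show "rini [?A1] \<in> pa_H ?A \<and> state k 1 (qs ! 0) s \<in> pa_V ?A \<and> state k 1 (qs !
        (forest_len g + 2)) s \<in> pa_V ?A \<or>
      rini [?A1] \<in> pa_V ?A \<and> state k 1 (qs ! 0) s \<in> pa_H ?A \<and> state k 1 (qs !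
          (forest_len g + 2)) s \<in> pa_H ?A"
      using inQ[of 0] inQ[of "forest_len g + 2"] inQS[of 0] 2(3) by (cases k) (simp_all add:
          rini_def state_in_states)
  qed
  then show ?case by simp
next
  case (3 k s qs)
  then show ?case by simp
next
  case (4 k s x f qs)
  have r1: "wpa_run (wpa_of_nwa N b0) [tree_run k s x qs]" using 4 by simp
  show ?case
  proof (cases "f = []")
    case True then show ?thesis using r1 by simp
  next
    case False
    have r2: "wpa_run (wpa_of_nwa N b0) (forest_run k s f (drop (tree_len x) qs))"
      using 4(2)[OF _ _ _ False] 4(3,4,5) set_drop_subset[of "tree_len x" qs] by auto
    have "rfin [tree_run k s x qs] = rini (forest_run k s f (drop (tree_len x) qs))"
      using forest_run_ends(1)[OF False, of "drop (tree_len x) qs"] 4(5) by (simp add: rfin_def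
          tree_run_ends)
    from wpa_run.cat[OF r1 r2 this] show ?thesis by simp
  qed
qed

lemma wpa_lab_runs:
  fixes x :: "'d ntree" and f :: "'d ntree list"
  shows "set qs \<subseteq> nwa_Q N \<Longrightarrow> s \<in> stack_syms N \<Longrightarrow>
      tree_len x < length qs \<Longrightarrow> wpa_blab (wpa_of_nwa N b0) (tree_run k s x qs) =
          enc_tree k x"
    "set qs \<subseteq> nwa_Q N \<Longrightarrow> s \<in> stack_syms N \<Longrightarrow> forest_len
        f < length qs \<Longrightarrow> map (wpa_blab (wpa_of_nwa N b0)) (forest_run k s f qs) =
            map (enc_tree k) f"
proof (induction k s x qs and k s f qs rule: tree_run_forest_run.induct)
  case (1 k s a qs)
  then show ?case by simp
next
  case (2 k s a g c qs)
  let ?A = "wpa_of_nwa N b0"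
  have l: "0 < length qs" "1 < length qs" using 2(4) by auto
  have q0: "qs ! 0 \<in> nwa_Q N" "qs ! 1 \<in> nwa_Q N" using 2(2) nth_mem[OF l(1)] nth_mem[OF
      l(2)] by blast+
  have q0S: "qs ! 0 \<in> stack_syms N" using q0 by (simp add: stack_syms_def)
  have sd: "set (drop 1 qs) \<subseteq> nwa_Q N" using 2(2) set_drop_subset[of 1 qs] by auto
  let ?A1 = "Atm (state (\<not> k) 0 (qs ! 0) (qs ! 0)) a (state (\<not> k) 1 (qs ! 1) (qs ! 0))"
  let ?A2 = "Atm (state (\<not> k) 1 (qs ! (forest_len g + 1)) (qs ! 0)) c (state (\<not> k) 2 (qs
      ! (forest_len g + 2)) (qs ! 0))"
  let ?Eg = "forest_run (\<not> k) (qs ! 0) g (drop 1 qs)"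
  have mg: "map (wpa_blab ?A) ?Eg = map (enc_tree (\<not> k)) g"
    using 2(1) sd q0S 2(4) by simp
  have junc: "\<forall>b \<in> set (butlast ([?A1] @ ?Eg @ [?A2])). (bfin b \<in> pa_H ?A) = (\<not> k)"
  proof
    fix b assume "b \<in> set (butlast ([?A1] @ ?Eg @ [?A2]))"
    then have "b = ?A1 \<or> b \<in> set ?Eg" by (simp add: butlast_append)
    then show "(bfin b \<in> pa_H ?A) = (\<not> k)"
    proof
      assume "b = ?A1" then show ?thesis using q0 q0S by (simp add: state_in_states)
    next
      assume bm: "b \<in> set ?Eg"
      have "forest_len g < length (drop 1 qs)" using 2(4) by simp
      from forest_run_junction[OF this bm] obtain i where i: "i \<le> forest_len g" "bfin b = state
          (\<not> k) 1 (drop 1 qs ! i) (qs ! 0)" by blast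
      have "drop 1 qs ! i \<in> nwa_Q N" using sd i(1) 2(4) nth_mem[of i "drop 1 qs"] by auto
      then show ?thesis using i q0S by (simp add: state_in_states)
    qed
  qed
  have "wpa_blab ?A (tree_run k s (Nest a g c) qs) = wpa_lab ?A ([?A1] @ ?Eg @ [?A2])" by simp
  also have "\<dots> = tfold (top (\<not> k)) (map (wpa_blab ?A) ([?A1] @ ?Eg @ [?A2]))"
    by (rule wpa_lab_tfold[OF junc])
  also have "\<dots> = tfold (top (\<not> k)) ([tsing a] @ map (enc_tree (\<not> k)) g @ [tsing c])"
    using mg by simp
  also have "\<dots> = enc_tree k (Nest a g c)"
  proof (cases "g = []")
    case False
    have "tfold (top (\<not> k)) ([tsing a] @ [enc_forest (\<not> k) g] @ [tsing c]) = tfold (top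
        (\<not> k)) ([tsing a] @ map (enc_tree (\<not> k)) g @ [tsing c])"
      unfolding enc_forest.simps by (rule tfold_top_flatten) (use False in simp)
    then show ?thesis using False by simp
  qed simp
  finally show ?case .
next
  case (3 k s qs)
  then show ?case by simp
next
  case (4 k s x f qs)
  have "wpa_blab (wpa_of_nwa N b0) (tree_run k s x qs) = enc_tree k x" using 4 by simp
  moreover have "map (wpa_blab (wpa_of_nwa N b0)) (forest_run k s f (drop (tree_len x) qs)) = map
      (enc_tree k) f"
    using 4(2) 4(3,4,5) set_drop_subset[of "tree_len x" qs] by auto
  ultimately show ?case by simp
qed

lemma wpa_lab_forest_run:
  assumes "set qs \<subseteq> nwa_Q N" "s \<in> stack_syms N" "forest_len f < length qs" "f \<noteq> []"
  shows "wpa_lab (wpa_of_nwa N b0) (forest_run k s f qs) = enc_forest k f"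
proof -
  have junc: "\<forall>b \<in> set (butlast (forest_run k s f qs)). (bfin b \<in> pa_H (wpa_of_nwa
      N b0)) = k"
  proof
    fix b assume "b \<in> set (butlast (forest_run k s f qs))"
    then have bm: "b \<in> set (forest_run k s f qs)" by (rule in_set_butlastD)
    from forest_run_junction[OF assms(3) bm] obtain i where i: "i \<le> forest_len f" "bfin b =
        state k 1 (qs ! i) s" by blast
    have "qs ! i \<in> nwa_Q N" using assms(1,3) i(1) nth_mem[of i qs] by auto
    then show "(bfin b \<in> pa_H (wpa_of_nwa N b0)) = k" using i assms(2) by (simp add: state_in_states)
  qed
  show ?thesis using wpa_lab_tfold[OF junc] wpa_lab_runs(2)[OF assms(1-3)] by (simp add:
      enc_forest.simps)
qed

lemma wpa_wt_runs:
  fixes x :: "'d ntree" and f :: "'d ntree list"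
  shows "set qs \<subseteq> nwa_Q N \<Longrightarrow> tree_len x < length qs \<Longrightarrow>
      wpa_bwt (wpa_of_nwa N b0) (tree_run k s x qs) = wnwa_wt N (nw_of_tree x) qs"
    "set qs \<subseteq> nwa_Q N \<Longrightarrow> forest_len f < length qs \<Longrightarrow> wpa_wt
        (wpa_of_nwa N b0) (forest_run k s f qs) = wnwa_wt N (nw_of_forest f) qs"
proof (induction k s x qs and k s f qs rule: tree_run_forest_run.induct)
  case (1 k s a qs)
  have l: "0 < length qs" "1 < length qs" using 1(2) by auto
  have q0: "qs ! 0 \<in> nwa_Q N" "qs ! 1 \<in> nwa_Q N" using 1(1) nth_mem[OF l(1)] nth_mem[OF
      l(2)] by blast+
  show ?case using q0 by (simp add: tr_mu_def wnwa_wt_def wnwa_step_def)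
next
  case (2 k s a g c qs)
  have inQ: "qs ! i \<in> nwa_Q N" if "i \<le> forest_len g + 2" for i using 2(2,3) that nth_mem[of
      i qs] by auto
  have sd: "set (drop 1 qs) \<subseteq> nwa_Q N" using 2(2) set_drop_subset[of 1 qs] by auto
  have IH: "wpa_wt (wpa_of_nwa N b0) (forest_run (\<not> k) (qs ! 0) g (drop 1 qs)) = wnwa_wt N
      (nw_of_forest g) (drop 1 qs)"
    using 2(1)[OF sd] 2(3) by simp
  show ?case
    using wnwa_wt_nw_of_Nest[of g qs N a c] 2(3) inQ[of 0] inQ[of 1] inQ[of "forest_len g + 1"]
        inQ[of "forest_len g + 2"] IH
    by (simp add: wpa_wt_append rini_def rfin_def tr_op_def tr_cl_def tr_mu_def mult.assoc)
next
  case (3 k s qs)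
  then show ?case using wnwa_wt_nw_of_forest_Nil by simp
next
  case (4 k s x f qs)
  have "wpa_bwt (wpa_of_nwa N b0) (tree_run k s x qs) = wnwa_wt N (nw_of_tree x) qs" using 4 by simp
  moreover have "wpa_wt (wpa_of_nwa N b0) (forest_run k s f (drop (tree_len x) qs)) = wnwa_wt N
      (nw_of_forest f) (drop (tree_len x) qs)"
    using 4(2) 4(3,4) set_drop_subset[of "tree_len x" qs] by auto
  ultimately show ?case using wnwa_wt_nw_of_forest_Cons[of x f qs N] 4(4) by simp
qed

end

lemma runs_inj:
  fixes x :: "'d ntree" and f :: "'d ntree list"
  shows "tree_run k s x qs = tree_run k s x qs' \<Longrightarrow> tree_len x < length qs
      \<Longrightarrow> tree_len x < length qs'
      \<Longrightarrow> i \<le> tree_len x \<Longrightarrow> qs ! i = qs' ! i"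
    and "forest_run k s f qs = forest_run k s f qs' \<Longrightarrow> forest_len f < length qs
        \<Longrightarrow> forest_len f < length qs'
      \<Longrightarrow> f \<noteq> [] \<Longrightarrow> i \<le> forest_len f \<Longrightarrow> qs !
          i = qs' ! i"
proof (induction k s x qs and k s f qs arbitrary: qs' i and qs' i rule: tree_run_forest_run.induct)
  case (1 k s a qs)
  then show ?case by (auto simp: le_Suc_eq)
next
  case (2 k s a g c qs)
  have ends: "qs ! 0 = qs' ! 0" "qs ! 1 = qs' ! 1" "qs ! (forest_len g + 1) = qs' ! (forest_len g + 1)"
      "qs ! (forest_len g + 2) = qs' ! (forest_len g + 2)"
    using 2(2) by auto
  have "forest_run (\<not> k) (qs ! 0) g (drop 1 qs) = forest_run (\<not> k) (qs ! 0) g (drop 1 qs')"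
    using 2(2) ends(1) by (auto simp: append_eq_append_conv)
  then have inner: "qs ! (j + 1) = qs' ! (j + 1)" if "g \<noteq> []" "j \<le> forest_len g" for j
    using 2(1)[of "drop 1 qs'" j] 2(3,4) that by simp
  show ?case
  proof (cases "i \<le> 1 \<or> forest_len g + 1 \<le> i")
    case True
    then have "i = 0 \<or> i = 1 \<or> i = forest_len g + 1 \<or> i = forest_len g + 2" using 2(5)
        by auto
    then show ?thesis using ends by auto
  next
    case False
    then show ?thesis using inner[of "i - 1"] by (cases "g = []") auto
  qed
next
  case (3 k s qs)
  then show ?case by simp
next
  case (4 k s x f qs)
  show ?case
  proof (cases "i \<le> tree_len x")
    case True
    then show ?thesis using 4 by simp
  next
    case False
    then have "f \<noteq> []" and "i - tree_len x \<le> forest_len f" using 4(7) by auto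
    then have "drop (tree_len x) qs ! (i - tree_len x) = drop (tree_len x) qs' ! (i - tree_len x)"
      using 4(2)[of "drop (tree_len x) qs'"] 4(3-5) by simp
    then show ?thesis using False 4(4,5) by simp
  qed
qed

section \<open>Runs of nonzero weight are forest runs\<close>

fun blocks_connected :: "'d blk list \<Rightarrow> bool" where
  "blocks_connected [] = True"
| "blocks_connected [b] = True"
| "blocks_connected (b # c # rs) = (bfin b = bini c \<and> blocks_connected (c # rs))"

lemma blocks_connected_append:
  "blocks_connected (xs @ ys) \<longleftrightarrow> blocks_connected xs \<and> blocks_connected ys
     \<and> (xs \<noteq> [] \<and> ys \<noteq> [] \<longrightarrow> bfin (last xs) = bini (hd ys))"
proof (induction xs rule: blocks_connected.induct)
  case (2 b)
  then show ?case by (cases ys) auto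
qed auto

definition wpa_block_ok :: "('d, 'k) wpa \<Rightarrow> 'd blk \<Rightarrow> bool" where
  "wpa_block_ok A b = (case b of
     Atm q1 a q2 \<Rightarrow> q1 \<in> pa_H A \<and> q2 \<in> pa_H A \<or> q1 \<in> pa_V A \<and>
         q2 \<in> pa_V A
   | Brk q1 s r q2 \<Rightarrow> wpa_run A r \<and> 2 \<le> length r
       \<and> (rini r \<in> pa_H A \<and> q1 \<in> pa_V A \<and> q2 \<in> pa_V A \<or> rini r \<in>
           pa_V A \<and> q1 \<in> pa_H A \<and> q2 \<in> pa_H A)
       \<and> s \<in> pa_Om A)"

text \<open>A flat description of runs: rule \<open>cat\<close> of \<open>wpa_run\<close> only glues connected blocks.\<close>
definition wpa_run_shape :: "('d, 'k) wpa \<Rightarrow> 'd blk list \<Rightarrow> bool" where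
  "wpa_run_shape A r \<longleftrightarrow> r \<noteq> [] \<and> blocks_connected r \<and>
      (\<forall>b \<in> set r. wpa_block_ok A b)"

lemma wpa_run_imp_shape: "wpa_run A r \<Longrightarrow> wpa_run_shape A r"
proof (induction rule: wpa_run.induct)
  case (cat r1 r2)
  then show ?case by (auto simp: wpa_run_shape_def blocks_connected_append rini_def rfin_def)
next
  case (br r1 r2 q1 q2 s)
  then have "r1 \<noteq> []" "r2 \<noteq> []" by (auto simp: wpa_run_shape_def)
  then have "wpa_run A (r1 @ r2) \<and> rini (r1 @ r2) = rini r1 \<and> 2 \<le> length (r1 @ r2)"
    using br.hyps wpa_run.cat[OF br.hyps(1-3)] by (cases r1; cases r2) (auto simp: rini_def)
  then show ?case using br.hyps by (simp add: wpa_run_shape_def wpa_block_ok_def)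
qed (simp add: wpa_run_shape_def wpa_block_ok_def)

lemma wpa_run_shape_middle:
  assumes "wpa_run_shape A (b # rm @ [b'])"
  shows "rm = [] \<Longrightarrow> bfin b = bini b'"
    and "rm \<noteq> [] \<Longrightarrow> wpa_run_shape A rm \<and> rini rm = bfin b \<and> rfin rm
        = bini b'"
  using assms blocks_connected_append[of "[b] @ rm" "[b']"] blocks_connected_append[of "[b]" rm]
  by (auto simp: wpa_run_shape_def rini_def rfin_def)

fun blk_size :: "'d blk \<Rightarrow> nat" and blks_size :: "'d blk list \<Rightarrow> nat" where
  "blk_size (Atm q1 a q2) = 1"
| "blk_size (Brk q1 s r q2) = Suc (blks_size r)"
| "blks_size [] = 0"
| "blks_size (b # rs) = blk_size b + blks_size rs"

lemma blks_size_append[simp]: "blks_size (xs @ ys) = blks_size xs + blks_size ys"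
  by (induction xs) auto

lemma blk_size_pos: "blk_size b \<ge> 1"
  by (cases b) auto

definition is_tree_run :: "('d, 'k::comm_semiring_1) wnwa \<Rightarrow> 'd blk \<Rightarrow> bool" where
  "is_tree_run N b \<longleftrightarrow>
     (\<exists>k s x qs. length qs = tree_len x + 1 \<and> set qs \<subseteq> nwa_Q N \<and> b =
         tree_run k s x qs)"

definition is_forest_run :: "('d, 'k::comm_semiring_1) wnwa \<Rightarrow> 'd blk list \<Rightarrow>
    bool" where
  "is_forest_run N r \<longleftrightarrow>
     (\<exists>k s f qs. f \<noteq> [] \<and> length qs = forest_len f + 1 \<and> set qs
         \<subseteq> nwa_Q N \<and> r = forest_run k s f qs)"

lemma is_forest_run_single:
  assumes "is_tree_run N b"
  shows "is_forest_run N [b]"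
proof -
  obtain k s x qs where "length qs = tree_len x + 1" "set qs \<subseteq> nwa_Q N" "b = tree_run k s x qs"
    using assms by (auto simp: is_tree_run_def)
  then show ?thesis
    unfolding is_forest_run_def by (intro exI[of _ k] exI[of _ s] exI[of _ "[x]"] exI[of _ qs]) simp
qed

lemma is_forest_run_Cons:
  assumes "is_tree_run N b" and "is_forest_run N r" and "bfin b = rini r"
  shows "is_forest_run N (b # r)"
proof -
  obtain k s x qs where x: "length qs = tree_len x + 1" "set qs \<subseteq> nwa_Q N" "b = tree_run
      k s x qs"
    using assms(1) by (auto simp: is_tree_run_def)
  obtain k' s' f qs' where f: "f \<noteq> []" "length qs' = forest_len f + 1" "set qs' \<subseteq>
      nwa_Q N"
    "r = forest_run k' s' f qs'"
    using assms(2) by (auto simp: is_forest_run_def)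
  have "bfin b = state k 1 (qs ! tree_len x) s" by (simp add: x(3) tree_run_ends)
  moreover have "rini r = state k' 1 (qs' ! 0) s'" using f forest_run_ends(1)[of f qs'] by simp
  ultimately have "state k 1 (qs ! tree_len x) s = state k' 1 (qs' ! 0) s'" using assms(3) by simp
  then have same: "k' = k" "s' = s" "qs' ! 0 = qs ! tree_len x" by simp_all
  define qs'' where "qs'' = take (tree_len x) qs @ qs'"
  have "tree_run k s x qs'' = b"
    unfolding x(3) using x(1) f(2) same(3)
    by (intro runs_cong(1)) (auto simp: qs''_def nth_append le_less)
  moreover have "drop (tree_len x) qs'' = qs'" using x(1) by (simp add: qs''_def)
  ultimately have "b # r = forest_run k s (x # f) qs''" using f(4) same by simp
  moreover have "length qs'' = forest_len (x # f) + 1" "set qs'' \<subseteq> nwa_Q N"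
    using x(1,2) f(2,3) set_take_subset[of "tree_len x" qs] by (auto simp: qs''_def)
  ultimately show ?thesis unfolding is_forest_run_def by blast
qed

context
  fixes N :: "('d, 'k::comm_semiring_1) wnwa" and b0 :: bool
begin

lemma tr_mu_nonzero:
  "tr_mu N x a y \<noteq> 0 \<Longrightarrow> nstate x \<in> nwa_Q N \<and> nstate y \<in> nwa_Q N
      \<and> stack x = stack y
     \<and> (phase x = 0 \<and> phase y = 1 \<or> phase x = 1 \<and> phase y = 1 \<or> phase x = 1
         \<and> phase y = 2)"
  unfolding tr_mu_def by (auto split: if_splits)

lemma tr_op_nonzero:
  "tr_op x s y \<noteq> (0::'k) \<Longrightarrow> phase x = 1 \<and> phase y = 0 \<and> s = stack x
      \<and> nstate y = nstate x \<and> stack y = nstate x"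
  unfolding tr_op_def by (auto split: if_splits)

lemma tr_cl_nonzero:
  "tr_cl x s y \<noteq> (0::'k) \<Longrightarrow> phase x = 2 \<and> phase y = 1 \<and> s = stack y
      \<and> nstate y = nstate x"
  unfolding tr_cl_def by (auto split: if_splits)

lemma state_eqI:
  assumes "x \<in> states N k'" "kind x = k" "phase x = p" "nstate x = q" "stack x = s"
  shows "x = state k p q s"
  using states_decode[OF assms(1)] assms(2-) by simp

lemma kind_states: "x \<in> states N k \<Longrightarrow> kind x = k"
  by (simp add: states_decode)

lemma Atm_ok_states:
  assumes "wpa_block_ok (wpa_of_nwa N b0) (Atm y a z)"
  shows "y \<in> states N (kind y)" "z \<in> states N (kind y)"
  using assms kind_states[of y True] kind_states[of y False] by (auto simp: wpa_block_ok_def)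

lemma block_ini_phase:
  assumes "wpa_bwt (wpa_of_nwa N b0) b \<noteq> 0"
  shows "phase (bini b) = 0 \<or> phase (bini b) = 1"
  using assms tr_mu_nonzero tr_op_nonzero by (cases b) (auto dest!: mult_not_zero)

lemma block_fin_phase:
  assumes "wpa_bwt (wpa_of_nwa N b0) b \<noteq> 0" and "phase (bini b) = 1"
  shows "phase (bfin b) = 1 \<or> phase (bfin b) = 2"
  using assms tr_mu_nonzero tr_cl_nonzero by (cases b) (auto dest!: mult_not_zero)

lemma block_Atm_if_ini_phase_0:
  assumes "wpa_bwt (wpa_of_nwa N b0) b \<noteq> 0" and "phase (bini b) = 0"
  obtains y a z where "b = Atm y a z"
  using assms tr_op_nonzero by (cases b) (auto dest!: mult_not_zero)

lemma block_Atm_if_fin_phase_2: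
  assumes "wpa_bwt (wpa_of_nwa N b0) b \<noteq> 0" and "phase (bfin b) = 2"
  obtains y a z where "b = Atm y a z"
  using assms tr_cl_nonzero by (cases b) (auto dest!: mult_not_zero)

lemma is_tree_run_Atm:
  assumes ok: "wpa_block_ok (wpa_of_nwa N b0) (Atm y a z)" and mu: "tr_mu N y a z \<noteq> 0"
    and "phase y = 1" and "phase z = 1"
  shows "is_tree_run N (Atm y a z)"
proof -
  note y = Atm_ok_states(1)[OF ok] and z = Atm_ok_states(2)[OF ok] and mu = tr_mu_nonzero[OF mu]
  have "y = state (kind y) 1 (nstate y) (stack y)" by (rule state_eqI[OF y refl assms(3) refl refl])
  moreover have "z = state (kind y) 1 (nstate z) (stack y)"
    using mu by (intro state_eqI[OF z kind_states[OF z] assms(4) refl]) simp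
  ultimately have "Atm y a z = Atm (state (kind y) 1 (nstate y) (stack y)) a (state (kind y) 1
      (nstate z) (stack y))"
    by (rule arg_cong2[where f = "\<lambda>u v. Atm u a v"])
  also have "\<dots> = tree_run (kind y) (stack y) (Leaf a) [nstate y, nstate z]" by simp
  finally show ?thesis
    using mu unfolding is_tree_run_def
    by (intro exI[of _ "kind y"] exI[of _ "stack y"] exI[of _ "Leaf a"] exI[of _ "[nstate y, nstate
        z]"]) simp
qed

lemma is_tree_run_Brk:
  assumes ok: "wpa_block_ok (wpa_of_nwa N b0) (Brk y s r z)" and nz: "wpa_bwt (wpa_of_nwa N b0)
      (Brk y s r z) \<noteq> 0"
    and IH: "\<And>r'. blks_size r' < blks_size r \<Longrightarrow> wpa_run_shape (wpa_of_nwa N b0)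
        r' \<Longrightarrow> wpa_wt (wpa_of_nwa N b0) r' \<noteq> 0
      \<Longrightarrow> phase (rini r') = 1 \<Longrightarrow> phase (rfin r') = 1 \<Longrightarrow>
          is_forest_run N r'"
  shows "is_tree_run N (Brk y s r z)"
proof -
  define k where "k = kind y"
  have shape: "wpa_run_shape (wpa_of_nwa N b0) r" and len: "2 \<le> length r"
    and y: "y \<in> states N k" and z: "z \<in> states N k" and ini: "rini r \<in> states N (\<not> k)"
    using ok wpa_run_imp_shape kind_states[of y True] kind_states[of y False]
    by (auto simp: wpa_block_ok_def k_def)
  have "tr_op y s (rini r) \<noteq> (0::'k)" "wpa_wt (wpa_of_nwa N b0) r \<noteq> 0" "tr_cl (rfin
      r) s z \<noteq> (0::'k)"
    using nz by (auto dest!: mult_not_zero)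
  note op = tr_op_nonzero[OF this(1)] and wt = this(2) and cl = tr_cl_nonzero[OF this(3)]
  obtain b1 r' where "r = b1 # r'" using len by (cases r) auto
  moreover obtain rm bl where "r' = rm @ [bl]" using len calculation by (cases r' rule: rev_cases) auto
  ultimately have r: "r = b1 # rm @ [bl]" by simp
  have wt_parts: "wpa_bwt (wpa_of_nwa N b0) b1 \<noteq> 0" "wpa_wt (wpa_of_nwa N b0) rm \<noteq>
      0" "wpa_bwt (wpa_of_nwa N b0) bl \<noteq> 0"
    using wt unfolding r by (auto simp: wpa_wt_append dest!: mult_not_zero)
  obtain y1 a z1 where b1: "b1 = Atm y1 a z1"
    using block_Atm_if_ini_phase_0[OF wt_parts(1)] op r by (auto simp: rini_def)
  obtain y2 c z2 where bl: "bl = Atm y2 c z2"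
    using block_Atm_if_fin_phase_2[OF wt_parts(3)] cl r by (auto simp: rfin_def)
  have y1: "y1 = rini r" and z2: "z2 = rfin r" using r b1 bl by (simp_all add: rini_def rfin_def)
  have ok1: "wpa_block_ok (wpa_of_nwa N b0) (Atm y1 a z1)" and ok2: "wpa_block_ok (wpa_of_nwa N b0)
      (Atm y2 c z2)"
    using shape r b1 bl by (auto simp: wpa_run_shape_def)
  have "tr_mu N y1 a z1 \<noteq> 0" "tr_mu N y2 c z2 \<noteq> 0" using wt_parts(1,3) b1 bl by simp_all
  note mu1 = tr_mu_nonzero[OF this(1)] and mu2 = tr_mu_nonzero[OF this(2)]
  have z1: "z1 \<in> states N (\<not> k)" "phase z1 = 1" "stack z1 = nstate y"
    using Atm_ok_states(2)[OF ok1] kind_states[OF ini] mu1 op y1 by auto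
  obtain g qsg where g: "length qsg = forest_len g + 1" "set qsg \<subseteq> nwa_Q N"
    "rm = forest_run (\<not> k) (nstate y) g qsg" "qsg ! 0 = nstate z1" "y2 = state (\<not> k) 1
        (qsg ! forest_len g) (nstate y)"
  proof (cases "rm = []")
    case True
    have "y2 = z1" using wpa_run_shape_middle(1)[of "wpa_of_nwa N b0" b1 rm bl] shape r b1 bl True
        by simp
    also have "z1 = state (\<not> k) 1 (nstate z1) (nstate y)"
      by (rule state_eqI[OF z1(1)]) (use z1 kind_states[OF z1(1)] in simp_all)
    finally have "y2 = state (\<not> k) 1 ([nstate z1] ! forest_len []) (nstate y)" by simp
    then show ?thesis using True mu1 by (intro that[of "[nstate z1]" "[]"]) simp_all
  next
    case False
    then have rm: "wpa_run_shape (wpa_of_nwa N b0) rm" "rini rm = z1" "rfin rm = y2"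
      using wpa_run_shape_middle(2)[of "wpa_of_nwa N b0" b1 rm bl] shape r b1 bl by simp_all
    have "is_forest_run N rm"
      using IH[OF _ rm(1) wt_parts(2)] rm(2,3) z1 mu2 cl z2 r blk_size_pos[of b1] by simp
    then obtain k' s' g qsg where rm': "length qsg = forest_len g + 1" "set qsg \<subseteq> nwa_Q N"
      "rm = forest_run k' s' g qsg" "g \<noteq> []"
      by (auto simp: is_forest_run_def)
    then have z1': "z1 = state k' 1 (qsg ! 0) s'" and y2: "y2 = state k' 1 (qsg ! forest_len g) s'"
      using rm forest_run_ends[of g qsg k' s'] by simp_all
    have "k' = (\<not> k)" "s' = nstate y" "qsg ! 0 = nstate z1"
      using kind_states[OF z1(1)] z1(3) unfolding z1' by simp_all
    then show ?thesis using rm' y2 by (intro that[of qsg g]) simp_all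
  qed
  define qs where "qs = nstate y # qsg @ [nstate z2]"
  have qs: "qs ! 0 = nstate y" "qs ! 1 = nstate z1" "qs ! (forest_len g + 1) = nstate y2"
      "qs ! (forest_len g + 2) = nstate z2" "drop 1 qs = qsg @ [nstate z2]"
    using g by (auto simp: qs_def nth_append)
  have "forest_run (\<not> k) (nstate y) g (qsg @ [nstate z2]) = rm"
    using g by (auto intro: runs_cong(2) simp: nth_append)
  moreover have "state k 1 (nstate y) (stack y) = y"
    by (rule state_eqI[OF y, symmetric]) (simp_all add: k_def op)
  moreover have "state (\<not> k) 0 (nstate y) (nstate y) = y1"
    unfolding y1 by (rule state_eqI[OF ini, symmetric]) (simp_all add: op kind_states[OF ini])
  moreover have "state (\<not> k) 1 (nstate z1) (nstate y) = z1"
    by (rule state_eqI[OF z1(1), symmetric]) (simp_all add: z1 kind_states[OF z1(1)])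
  moreover have "state (\<not> k) 2 (nstate z2) (nstate y) = z2"
  proof (rule state_eqI[OF Atm_ok_states(2)[OF ok2], symmetric])
    show "kind z2 = (\<not> k)" "stack z2 = nstate y"
      using kind_states[OF Atm_ok_states(2)[OF ok2]] g(5) mu2 by simp_all
  qed (use cl z2 in simp_all)
  moreover have "state k 1 (nstate z2) (stack y) = z" "s = stack y"
    by (rule state_eqI[OF z, symmetric]) (use kind_states[OF z] cl op z2 in simp_all)
  ultimately have "Brk y s r z = tree_run k (stack y) (Nest a g c) qs"
    unfolding tree_run.simps qs using r b1 bl g(4,5) by simp
  moreover have "set qs \<subseteq> nwa_Q N" using g(2) mu2 states_decode[OF y] by (auto simp: qs_def)
  ultimately show ?thesis
    unfolding is_tree_run_def using g(1) by (intro exI[of _ k] exI[of _ "stack y"] exI[of _ "Nest a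
        g c"] exI[of _ qs]) (simp add: qs_def)
qed

lemma is_forest_run_if_wt_nonzero:
  assumes "wpa_run_shape (wpa_of_nwa N b0) r" and "wpa_wt (wpa_of_nwa N b0) r \<noteq> 0" and
      "phase (rini r) = 1" and "phase (rfin r) = 1"
  shows "is_forest_run N r"
  using assms
proof (induction "blks_size r" arbitrary: r rule: less_induct)
  case less
  obtain b rest where r: "r = b # rest" using less.prems(1) by (cases r) (auto simp: wpa_run_shape_def)
  have ok: "wpa_block_ok (wpa_of_nwa N b0) b" and nz: "wpa_bwt (wpa_of_nwa N b0) b \<noteq>
      0" "wpa_wt (wpa_of_nwa N b0) rest \<noteq> 0"
    using less.prems(1,2) r by (auto simp: wpa_run_shape_def)
  have ini: "phase (bini b) = 1" using less.prems(3) r by (simp add: rini_def)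
  have rest: "wpa_run_shape (wpa_of_nwa N b0) rest \<and> rini rest = bfin b \<and> rfin rest =
      rfin r" if "rest \<noteq> []"
    using less.prems(1) r that blocks_connected_append[of "[b]" rest]
    by (auto simp: wpa_run_shape_def rini_def rfin_def)
  have fin: "phase (bfin b) = 1"
  proof (cases rest)
    case Nil
    then show ?thesis using less.prems(4) r by (simp add: rfin_def)
  next
    case (Cons c rs)
    then have "phase (bini c) = 0 \<or> phase (bini c) = 1"
      using nz(2) mult_not_zero[of "wpa_bwt (wpa_of_nwa N b0) c" "wpa_wt (wpa_of_nwa N b0) rs"] by
          (intro block_ini_phase) simp
    moreover have "bini c = bfin b" using rest Cons by (simp add: rini_def)
    ultimately show ?thesis using block_fin_phase[OF nz(1) ini] by auto
  qed
  have tree: "is_tree_run N b"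
  proof (cases b)
    case (Atm y a z)
    then show ?thesis using is_tree_run_Atm ok nz(1) ini fin by simp
  next
    case (Brk y s r' z)
    have "blks_size r' < blks_size r" using r Brk by simp
    then show ?thesis
      using ok nz(1) unfolding Brk by (intro is_tree_run_Brk less.hyps) auto
  qed
  show ?case
  proof (cases "rest = []")
    case True
    then show ?thesis using is_forest_run_single[OF tree] r by simp
  next
    case False
    have "is_forest_run N rest"
      using rest[OF False] nz(2) fin less.prems(4) r blk_size_pos[of b] by (intro less.hyps) auto
    then show ?thesis using is_forest_run_Cons[OF tree] rest[OF False] r by simp
  qed
qed

end

lemma length_wpa_lab_Cons:
  "length (fst (wpa_lab A (b # rs))) = length (fst (wpa_blab A b)) + length (fst (wpa_lab A rs))"
  by (cases rs) (auto simp: tcirc_def tbul_def)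

lemma length_wpa_lab_append:
  "length (fst (wpa_lab A (r @ r'))) = length (fst (wpa_lab A r)) + length (fst (wpa_lab A r'))"
  by (induction r) (simp_all add: length_wpa_lab_Cons)

lemma blks_size_le_label: "wpa_run A r \<Longrightarrow> blks_size r + length r \<le> 2 * length
    (fst (wpa_lab A r))"
proof (induction rule: wpa_run.induct)
  case (br r1 r2 q1 q2 s)
  then have "r1 \<noteq> []" "r2 \<noteq> []" using wpa_run_imp_shape by (auto simp: wpa_run_shape_def)
  then have "length r1 \<ge> 1" "length r2 \<ge> 1" by (simp_all add: Suc_le_eq)
  then show ?case using br.IH by (simp add: length_wpa_lab_append)
qed (simp_all add: tsing_def length_wpa_lab_append)

lemma length_le_blks_size: "length r \<le> blks_size r"
proof (induction r)
  case (Cons b r)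
  then show ?case using blk_size_pos[of b] by simp
qed simp

lemma blk_size_le_blks_size: "b \<in> set r \<Longrightarrow> blk_size b \<le> blks_size r"
  by (induction r) auto

lemma wpa_runs_subset_lists:
  "{r. wpa_run A r \<and> blks_size r \<le> n} \<subseteq> {r. set r \<subseteq> {b. wpa_block_ok A
      b \<and> blk_size b \<le> n} \<and> length r \<le> n}"
proof clarify
  fix r assume r: "wpa_run A r" "blks_size r \<le> n"
  have "wpa_block_ok A b \<and> blk_size b \<le> n" if "b \<in> set r" for b
    using wpa_run_imp_shape[OF r(1)] le_trans[OF blk_size_le_blks_size[OF that] r(2)] that
    by (simp add: wpa_run_shape_def)
  moreover have "length r \<le> n" using le_trans[OF length_le_blks_size r(2)] .
  ultimately show "set r \<subseteq> {b. wpa_block_ok A b \<and> blk_size b \<le> n} \<and> length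
      r \<le> n" by blast
qed

lemma finite_ok_blocks:
  fixes A :: "('d::finite, 'k) wpa"
  assumes "finite (pa_H A \<union> pa_V A)" and "finite (pa_Om A)"
  shows "finite {b. wpa_block_ok A b \<and> blk_size b \<le> n}"
proof (induction n)
  case 0
  have "blk_size b \<noteq> 0" for b :: "'d blk" using blk_size_pos[of b] by simp
  then have "{b. wpa_block_ok A b \<and> blk_size b \<le> 0} = {}" by (auto simp del: neq0_conv)
  then show ?case by (simp only: finite.emptyI)
next
  case (Suc m)
  let ?S = "pa_H A \<union> pa_V A"
  have "finite {r. wpa_run A r \<and> blks_size r \<le> m}"
    using wpa_runs_subset_lists finite_lists_length_le[OF Suc.IH] by (rule finite_subset)
  then have "finite ((\<lambda>(q1, a, q2). Atm q1 a q2) ` (?S \<times> (UNIV :: 'd set) \<times> ?S)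
      \<union> (\<lambda>(q1, s, r, q2). Brk q1 s r q2) ` (?S \<times> pa_Om A \<times> {r. wpa_run
          A r \<and> blks_size r \<le> m} \<times> ?S))"
    using assms by simp
  moreover have "{b. wpa_block_ok A b \<and> blk_size b \<le> Suc m} \<subseteq>
      (\<lambda>(q1, a, q2). Atm q1 a q2) ` (?S \<times> UNIV \<times> ?S)
      \<union> (\<lambda>(q1, s, r, q2). Brk q1 s r q2) ` (?S \<times> pa_Om A \<times> {r. wpa_run
          A r \<and> blks_size r \<le> m} \<times> ?S)"
  proof
    fix b assume "b \<in> {b. wpa_block_ok A b \<and> blk_size b \<le> Suc m}"
    then have b: "wpa_block_ok A b" by simp
    show "b \<in> (\<lambda>(q1, a, q2). Atm q1 a q2) ` (?S \<times> UNIV \<times> ?S)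
      \<union> (\<lambda>(q1, s, r, q2). Brk q1 s r q2) ` (?S \<times> pa_Om A \<times> {r. wpa_run
          A r \<and> blks_size r \<le> m} \<times> ?S)"
    proof (cases b)
      case (Atm q1 a q2)
      then have "q1 \<in> ?S" "q2 \<in> ?S" using b by (auto simp: wpa_block_ok_def)
      then show ?thesis using Atm by (intro UnI1 rev_image_eqI[of "(q1, a, q2)"]) auto
    next
      case (Brk q1 s r q2)
      then have "q1 \<in> ?S" "q2 \<in> ?S" "s \<in> pa_Om A" "wpa_run A r" "blks_size r \<le> m"
        using b \<open>b \<in> _\<close> by (auto simp: wpa_block_ok_def)
      then show ?thesis using Brk by (intro UnI2 rev_image_eqI[of "(q1, s, r, q2)"]) auto
    qed
  qed
  ultimately show ?case by (rule finite_subset[rotated])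
qed

lemma finite_wpa_runs:
  fixes A :: "('d::finite, 'k) wpa"
  assumes "finite (pa_H A \<union> pa_V A)" and "finite (pa_Om A)"
  shows "finite {r. wpa_run A r \<and> blks_size r \<le> n}"
  using wpa_runs_subset_lists finite_lists_length_le[OF finite_ok_blocks[OF assms]] by (rule
      finite_subset)

section \<open>The behaviour of the parenthesizing automaton\<close>

definition state_seqs :: "nat set \<Rightarrow> nat \<Rightarrow> nat \<Rightarrow> nat
    \<Rightarrow> nat list set" where
  "state_seqs Q n q q' = {qs. length qs = n + 1 \<and> set qs \<subseteq> Q \<and> qs ! 0 = q
      \<and> qs ! n = q'}"

lemma sum_lists_by_ends:
  assumes "finite Q"
  shows "(\<Sum>qs \<in> {qs. length qs = Suc n \<and> set qs \<subseteq> Q}. h qs)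
    = (\<Sum>q\<in>Q. \<Sum>q'\<in>Q. \<Sum>qs \<in> state_seqs Q n q q'. h qs)"
proof -
  let ?all = "{qs. length qs = Suc n \<and> set qs \<subseteq> Q}" and ?ends = "\<lambda>qs. (qs !
      0, qs ! n)"
  have "finite ?all" using finite_lists_length_eq[OF assms, of "Suc n"] by (simp add: conj_commute)
  moreover have "?ends ` ?all \<subseteq> Q \<times> Q" by (auto intro!: nth_mem)
  ultimately have "(\<Sum>qs \<in> ?all. h qs) = (\<Sum>p \<in> Q \<times> Q. \<Sum>qs \<in> {qs
      \<in> ?all. ?ends qs = p}. h qs)"
    using assms by (intro sum.group[symmetric]) auto
  also have "\<dots> = (\<Sum>q\<in>Q. \<Sum>q'\<in>Q. \<Sum>qs \<in> {qs \<in> ?all. ?ends qs =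
      (q, q')}. h qs)"
    by (rule sum.cartesian_product')
  finally show ?thesis by (simp add: state_seqs_def conj_ac)
qed

lemma wnwa_beh_nw_of_forest:
  assumes "finite (nwa_Q N)"
  shows "wnwa_beh N (nw_of_forest f) = (\<Sum>q\<in>nwa_Q N. \<Sum>q'\<in>nwa_Q N.
    nwa_iota N q * (\<Sum>qs \<in> state_seqs (nwa_Q N) (forest_len f) q q'. wnwa_wt N
        (nw_of_forest f) qs) * nwa_kappa N q')"
proof -
  have "wnwa_beh N (nw_of_forest f) = (\<Sum>qs \<in> {qs. length qs = Suc (forest_len f) \<and>
      set qs \<subseteq> nwa_Q N}.
      nwa_iota N (qs ! 0) * wnwa_wt N (nw_of_forest f) qs * nwa_kappa N (qs ! forest_len f))"
    unfolding wnwa_beh_def wnwa_wt_def by (simp add: length_nw_of)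
  also have "\<dots> = (\<Sum>q\<in>nwa_Q N. \<Sum>q'\<in>nwa_Q N. \<Sum>qs \<in> state_seqs (nwa_Q
      N) (forest_len f) q q'.
      nwa_iota N (qs ! 0) * wnwa_wt N (nw_of_forest f) qs * nwa_kappa N (qs ! forest_len f))"
    by (rule sum_lists_by_ends[OF assms])
  also have "\<dots> = (\<Sum>q\<in>nwa_Q N. \<Sum>q'\<in>nwa_Q N.
    nwa_iota N q * (\<Sum>qs \<in> state_seqs (nwa_Q N) (forest_len f) q q'. wnwa_wt N
        (nw_of_forest f) qs) * nwa_kappa N q')"
    by (intro sum.cong refl) (simp add: state_seqs_def sum_distrib_left sum_distrib_right)
  finally show ?thesis .
qed

lemma forest_run_inj_on:
  assumes "f \<noteq> []"
  shows "inj_on (forest_run k s f) {qs. length qs = forest_len f + 1}"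
proof (rule inj_onI)
  fix qs qs' assume qs: "qs \<in> {qs. length qs = forest_len f + 1}" and qs': "qs' \<in> {qs.
      length qs = forest_len f + 1}"
    and eq: "forest_run k s f qs = forest_run k s f qs'"
  show "qs = qs'"
  proof (rule nth_equalityI)
    show "length qs = length qs'" using qs qs' by simp
    fix i assume "i < length qs"
    then show "qs ! i = qs' ! i" using runs_inj(2)[OF eq _ _ assms] qs qs' by simp
  qed
qed

lemma enc_series_phi_enc_forest:
  assumes "f \<noteq> []"
  shows "enc_series (phi b) S (enc_forest b f) = S (nw_of_forest f)"
proof -
  have enc: "is_nw (nw_of_forest f) \<and> phi b (nw_of_forest f) = enc_forest b f"
    by (simp add: is_nw_nw_of_forest phi_nw_of_forest assms)
  have "(THE nw. is_nw nw \<and> phi b nw = enc_forest b f) = nw_of_forest f"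
  proof (rule the_equality)
    fix nw assume nw: "is_nw nw \<and> phi b nw = enc_forest b f"
    obtain f' where f': "f' \<noteq> []" "nw_of_forest f' = nw" using nw_of_forest_surj[of nw] nw
        by blast
    then have "enc_forest b f' = enc_forest b f" using nw phi_nw_of_forest[OF f'(1), of b] by simp
    then have "f' = f" by (rule enc_forest_inj[OF f'(1) assms])
    then show "nw = nw_of_forest f" using f'(2) by simp
  qed (rule enc)
  moreover have "\<exists>nw. is_nw nw \<and> phi b nw = enc_forest b f" using enc by blast
  ultimately show ?thesis unfolding enc_series_def by (simp only: if_True)
qed

lemma enc_series_phi_not_enc:
  assumes "\<nexists>f. f \<noteq> [] \<and> \<tau> = enc_forest b f"
  shows "enc_series (phi b) S \<tau> = 0"
proof -
  have "\<not> (is_nw nw \<and> phi b nw = \<tau>)" for nw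
  proof
    assume nw: "is_nw nw \<and> phi b nw = \<tau>"
    obtain f where f: "f \<noteq> []" "nw_of_forest f = nw" using nw_of_forest_surj[of nw] nw by blast
    then have "\<tau> = enc_forest b f" using nw phi_nw_of_forest[OF f(1), of b] by simp
    then show False using assms f(1) by blast
  qed
  then have "\<nexists>nw. is_nw nw \<and> phi b nw = \<tau>" by blast
  then show ?thesis unfolding enc_series_def by (simp only: if_False)
qed

context
  fixes N :: "('d::finite, 'k::comm_semiring_1) wnwa" and b0 :: bool
begin

definition runs_between :: "nat \<Rightarrow> nat \<Rightarrow> 'd tx \<Rightarrow> 'd blk list
    set" where
  "runs_between q1 q2 \<tau> =
     {r. wpa_run (wpa_of_nwa N b0) r \<and> rini r = q1 \<and> rfin r = q2 \<and> wpa_lab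
         (wpa_of_nwa N b0) r = \<tau>}"

lemma zero_stack_syms: "0 \<in> stack_syms N"
  by (simp add: stack_syms_def)

lemma finite_runs_between:
  assumes "finite (nwa_Q N)"
  shows "finite (runs_between q1 q2 \<tau>)"
proof (rule finite_subset)
  show "runs_between q1 q2 \<tau> \<subseteq> {r. wpa_run (wpa_of_nwa N b0) r \<and> blks_size r
      \<le> 2 * length (fst \<tau>)}"
  proof clarify
    fix r assume "r \<in> runs_between q1 q2 \<tau>"
    then have "wpa_run (wpa_of_nwa N b0) r" "wpa_lab (wpa_of_nwa N b0) r = \<tau>" by (simp_all
        add: runs_between_def)
    then show "wpa_run (wpa_of_nwa N b0) r \<and> blks_size r \<le> 2 * length (fst \<tau>)"
      using blks_size_le_label[of "wpa_of_nwa N b0" r] by simp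
  qed
  show "finite {r. wpa_run (wpa_of_nwa N b0) r \<and> blks_size r \<le> 2 * length (fst \<tau>)}"
    by (rule finite_wpa_runs) (use assms states_finite in \<open>auto simp: stack_syms_def\<close>)
qed

lemma runs_between_nonzero:
  assumes r: "r \<in> runs_between (state b0 1 q 0) (state b0 1 q' 0) \<tau>" and nz: "wpa_wt
      (wpa_of_nwa N b0) r \<noteq> 0"
  obtains f qs where "f \<noteq> []" "qs \<in> state_seqs (nwa_Q N) (forest_len f) q q'" "r =
      forest_run b0 0 f qs"
    "\<tau> = enc_forest b0 f"
proof -
  have run: "wpa_run (wpa_of_nwa N b0) r" and ends: "rini r = state b0 1 q 0" "rfin r = state b0 1 q' 0"
    and lab: "wpa_lab (wpa_of_nwa N b0) r = \<tau>" using r by (auto simp: runs_between_def)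
  have "is_forest_run N r"
    using is_forest_run_if_wt_nonzero[OF wpa_run_imp_shape[OF run] nz] ends by simp
  then obtain k s f qs where f: "f \<noteq> []" "length qs = forest_len f + 1" "set qs \<subseteq>
      nwa_Q N"
    "r = forest_run k s f qs"
    by (auto simp: is_forest_run_def)
  then have "state k 1 (qs ! 0) s = state b0 1 q 0" "state k 1 (qs ! forest_len f) s = state b0 1 q' 0"
    using ends forest_run_ends[OF f(1), of qs k s] by simp_all
  then have "k = b0" "s = 0" "qs ! 0 = q" "qs ! forest_len f = q'" by simp_all
  moreover have "wpa_lab (wpa_of_nwa N b0) (forest_run b0 0 f qs) = enc_forest b0 f"
    using f zero_stack_syms by (intro wpa_lab_forest_run) auto
  ultimately show ?thesis using f lab by (intro that) (auto simp: state_seqs_def)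
qed

lemma forest_runs_in_runs_between:
  assumes f: "f \<noteq> []" and qs: "qs \<in> state_seqs (nwa_Q N) (forest_len f) q q'"
  shows "forest_run b0 0 f qs \<in> runs_between (state b0 1 q 0) (state b0 1 q' 0) (enc_forest b0 f)"
proof -
  have set: "set qs \<subseteq> nwa_Q N" and len: "forest_len f < length qs"
    and ends: "qs ! 0 = q" "qs ! forest_len f = q'"
    using qs by (auto simp: state_seqs_def)
  have "wpa_run (wpa_of_nwa N b0) (forest_run b0 0 f qs)"
    by (rule wpa_run_runs(2)[OF set zero_stack_syms len f])
  moreover have "wpa_lab (wpa_of_nwa N b0) (forest_run b0 0 f qs) = enc_forest b0 f"
    by (rule wpa_lab_forest_run[OF set zero_stack_syms len f])
  ultimately show ?thesis
    using forest_run_ends[OF f len] ends by (simp add: runs_between_def)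
qed

lemma sum_runs_between_enc:
  assumes "finite (nwa_Q N)" and "f \<noteq> []"
  shows "(\<Sum>r \<in> runs_between (state b0 1 q 0) (state b0 1 q' 0) (enc_forest b0 f). wpa_wt
      (wpa_of_nwa N b0) r)
    = (\<Sum>qs \<in> state_seqs (nwa_Q N) (forest_len f) q q'. wnwa_wt N (nw_of_forest f) qs)"
proof -
  let ?R = "runs_between (state b0 1 q 0) (state b0 1 q' 0) (enc_forest b0 f)"
    and ?Q = "state_seqs (nwa_Q N) (forest_len f) q q'"
  have "wpa_wt (wpa_of_nwa N b0) r = 0" if r: "r \<in> ?R - forest_run b0 0 f ` ?Q" for r
  proof (rule ccontr)
    assume "wpa_wt (wpa_of_nwa N b0) r \<noteq> 0"
    then obtain f' qs where "f' \<noteq> []" "qs \<in> state_seqs (nwa_Q N) (forest_len f') q q'"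
      "r = forest_run b0 0 f' qs" "enc_forest b0 f = enc_forest b0 f'"
      using r runs_between_nonzero by blast
    then show False using r enc_forest_inj[of f' f b0] assms(2) by auto
  qed
  then have "(\<Sum>r \<in> ?R. wpa_wt (wpa_of_nwa N b0) r) = (\<Sum>r \<in> forest_run b0 0 f `
      ?Q. wpa_wt (wpa_of_nwa N b0) r)"
    using forest_runs_in_runs_between[OF assms(2)]
    by (intro sum.mono_neutral_right finite_runs_between assms(1)) auto
  also have "\<dots> = (\<Sum>qs \<in> ?Q. wpa_wt (wpa_of_nwa N b0) (forest_run b0 0 f qs))"
    using forest_run_inj_on[OF assms(2)] by (intro sum.reindex[unfolded comp_def])
      (auto simp: state_seqs_def intro: inj_on_subset)
  also have "\<dots> = (\<Sum>qs \<in> ?Q. wnwa_wt N (nw_of_forest f) qs)"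
    by (intro sum.cong refl wpa_wt_runs(2)) (auto simp: state_seqs_def)
  finally show ?thesis .
qed

lemma sum_runs_between_not_enc:
  assumes "\<nexists>f. f \<noteq> [] \<and> \<tau> = enc_forest b0 f"
  shows "(\<Sum>r \<in> runs_between (state b0 1 q 0) (state b0 1 q' 0) \<tau>. wpa_wt (wpa_of_nwa
      N b0) r) = 0"
proof (rule sum.neutral, rule ballI, rule ccontr)
  fix r assume "r \<in> runs_between (state b0 1 q 0) (state b0 1 q' 0) \<tau>" "wpa_wt (wpa_of_nwa
      N b0) r \<noteq> 0"
  then obtain f where "f \<noteq> []" "\<tau> = enc_forest b0 f" by (rule runs_between_nonzero)
  then show False using assms by blast
qed

lemma sum_top_states:
  assumes "finite (nwa_Q N)"
    and "\<And>x. x \<in> states N True \<union> states N False \<Longrightarrow> x \<notin>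
        (\<lambda>q. state b0 1 q 0) ` nwa_Q N \<Longrightarrow> g x = 0"
  shows "sum g (states N True \<union> states N False) = (\<Sum>q\<in>nwa_Q N. g (state b0 1 q 0))"
proof -
  have "(\<lambda>q. state b0 1 q 0) ` nwa_Q N \<subseteq> states N True \<union> states N False"
    using zero_stack_syms by (cases b0) (auto simp: state_in_states)
  then have "sum g (states N True \<union> states N False) = sum g ((\<lambda>q. state b0 1 q 0) `
      nwa_Q N)"
    using assms states_finite by (intro sum.mono_neutral_right) auto
  also have "\<dots> = (\<Sum>q\<in>nwa_Q N. g (state b0 1 q 0))"
    by (rule sum.reindex[unfolded comp_def]) (auto intro: inj_onI)
  finally show ?thesis .
qed

lemma init_fin_wt_eq_0:
  assumes "x \<notin> (\<lambda>q. state b0 1 q 0) ` nwa_Q N"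
  shows "init_wt N b0 x = 0" and "fin_wt N b0 x = 0"
proof -
  have "\<not> (x \<in> states N b0 \<and> phase x = 1 \<and> stack x = 0)"
  proof
    assume x: "x \<in> states N b0 \<and> phase x = 1 \<and> stack x = 0"
    then have "x = state b0 1 (nstate x) 0"
      using kind_states by (intro state_eqI[of x N b0]) auto
    moreover have "nstate x \<in> nwa_Q N" using x states_decode by blast
    ultimately show False using assms by blast
  qed
  then show "init_wt N b0 x = 0" and "fin_wt N b0 x = 0" by (auto simp: init_wt_def fin_wt_def)
qed

lemma wpa_beh_wpa_of_nwa:
  assumes "finite (nwa_Q N)"
  shows "wpa_beh (wpa_of_nwa N b0) \<tau> = (\<Sum>q\<in>nwa_Q N. \<Sum>q'\<in>nwa_Q N.
     nwa_iota N q * (\<Sum>r \<in> runs_between (state b0 1 q 0) (state b0 1 q' 0) \<tau>. wpa_wt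
         (wpa_of_nwa N b0) r) * nwa_kappa N q')"
proof -
  have "wpa_beh (wpa_of_nwa N b0) \<tau> = (\<Sum>q1 \<in> states N True \<union> states N False.
      \<Sum>q2 \<in> states N True \<union> states N False.
       init_wt N b0 q1 * (\<Sum>r \<in> runs_between q1 q2 \<tau>. wpa_wt (wpa_of_nwa N b0) r) *
           fin_wt N b0 q2)"
    unfolding wpa_beh_def runs_between_def by simp
  also have "\<dots> = (\<Sum>q\<in>nwa_Q N. \<Sum>q2 \<in> states N True \<union> states N False.
      init_wt N b0 (state b0 1 q 0)
      * (\<Sum>r \<in> runs_between (state b0 1 q 0) q2 \<tau>. wpa_wt (wpa_of_nwa N b0) r) *
          fin_wt N b0 q2)"
    by (intro sum_top_states[OF assms]) (simp add: init_fin_wt_eq_0)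
  also have "\<dots> = (\<Sum>q\<in>nwa_Q N. \<Sum>q'\<in>nwa_Q N. init_wt N b0 (state b0 1 q 0)
      * (\<Sum>r \<in> runs_between (state b0 1 q 0) (state b0 1 q' 0) \<tau>. wpa_wt (wpa_of_nwa N
          b0) r) * fin_wt N b0 (state b0 1 q' 0))"
    by (intro sum.cong refl sum_top_states[OF assms]) (simp add: init_fin_wt_eq_0)
  also have "\<dots> = (\<Sum>q\<in>nwa_Q N. \<Sum>q'\<in>nwa_Q N.
     nwa_iota N q * (\<Sum>r \<in> runs_between (state b0 1 q 0) (state b0 1 q' 0) \<tau>. wpa_wt
         (wpa_of_nwa N b0) r) * nwa_kappa N q')"
    using zero_stack_syms by (intro sum.cong refl) (simp add: init_wt_def fin_wt_def state_in_states)
  finally show ?thesis .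
qed

lemma enc_series_eq_wpa_beh:
  assumes "finite (nwa_Q N)" and S: "\<And>nw. is_nw nw \<Longrightarrow> S nw = wnwa_beh N nw"
  shows "enc_series (phi b0) S \<tau> = wpa_beh (wpa_of_nwa N b0) \<tau>"
proof (cases "\<exists>f. f \<noteq> [] \<and> \<tau> = enc_forest b0 f")
  case True
  then obtain f where f: "f \<noteq> []" "\<tau> = enc_forest b0 f" by blast
  have "enc_series (phi b0) S \<tau> = S (nw_of_forest f)" by (simp add: f enc_series_phi_enc_forest)
  also have "\<dots> = wnwa_beh N (nw_of_forest f)" by (rule S[OF is_nw_nw_of_forest[OF f(1)]])
  also have "\<dots> = wpa_beh (wpa_of_nwa N b0) \<tau>"
    by (simp only: wnwa_beh_nw_of_forest[OF assms(1)] wpa_beh_wpa_of_nwa[OF assms(1)]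
        sum_runs_between_enc[OF assms(1) f(1)] f(2))
  finally show ?thesis .
next
  case False
  then show ?thesis
    unfolding wpa_beh_wpa_of_nwa[OF assms(1)] sum_runs_between_not_enc[OF False]
    by (simp add: enc_series_phi_not_enc[OF False])
qed

end

theorem proposition5p8:
  fixes S :: "('d::finite) nword \<Rightarrow> 'k::comm_semiring_1"
  assumes "regular_nw_series S"
  shows "regular_txt_series (enc_series Phi_circ S) \<and> regular_txt_series (enc_series Phi_bul S)"
proof -
  obtain N :: "('d, 'k) wnwa" where "wnwa_ok N" and S: "\<And>nw. is_nw nw \<Longrightarrow> S nw =
      wnwa_beh N nw"
    using assms unfolding regular_nw_series_def by blast
  then have fin: "finite (nwa_Q N)" by (simp add: wnwa_ok_def)
  have "regular_txt_series (enc_series (phi b) S)" for b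
    unfolding regular_txt_series_def
    by (intro exI[of _ "wpa_of_nwa N b"] conjI ballI wpa_ok_wpa_of_nwa[OF fin]
        enc_series_eq_wpa_beh[OF fin S])
  then show ?thesis unfolding Phi_circ_def Phi_bul_def by blast
qed

end
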